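(* Let $M$ be an $L$-structure, $G$ a group definable in $M$, and assume every complete type in $S_{G}(M)$ is definable. Then $(S_{G}(M),G,\mathrm{tp}(1/M))$, with the action $g\cdot\mathrm{tp}(a/M)=\mathrm{tp}(ga/M)$ and distinguished point the type of the identity $1$ of $G$, is the unique universal definable $G$-ambit: for any definable $G$-ambit $(X,G,x_{0})$ there is a unique continuous $G$-equivariant map $h\colon S_{G}(M)\to X$ with $h(\mathrm{tp}(1/M))=x_{0}$, and this map is necessarily surjective.
   Context: $M^{*}$ is a $\kappa$-saturated elementary extension of $M$ with $\kappa>2^{|M|+|L|}$ and $G^{*}$ the interpretation of $G$ in it; $S_{G}(M)$ is the Stone space of complete types over $M$ containing the formula defining $G$ (elements $g\in G$ are identified with the realized types $\mathrm{tp}(g/M)$). A type $p\in S(M)$ is definable if for every $L$-formula $\varphi(x,y)$, $\{b\in M:\varphi(x,b)\in p\}$ is definable in $M$. For a compact Hausdorff space $C$, a map $f\colon G\to C$ is definable if for any disjoint closed $C_{1},C_{2}\subseteq C$ there is a set $Y'\subseteq G$ definable in $M$ (with parameters) with $f^{-1}(C_{1})\subseteq Y'$ and $Y'\cap f^{-1}(C_{2})=\emptyset$. A definable $G$-flow is a compact Hausdorff space $X$ with an action of $G$ by homeomorphisms such that for each $x\in X$ the map $g\mapsto g\cdot x$ from $G$ to $X$ is definable. A definable $G$-ambit $(X,G,x_{0})$ is a definable $G$-flow with a point $x_{0}\in X$ whose orbit $G\cdot x_{0}$ is dense in $X$. *)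

theory Defs
  imports "HOL-Analysis.Analysis" "HOL-Algebra.Group"
begin

text \<open>An L-structure M is given by its universe (the whole type 'm), an interpretation
  FI of the function symbols and RI of the relation symbols (applied to argument lists).\<close>

datatype 'f trm = Var nat | Fn 'f "'f trm list"

datatype ('f, 'r) fm =
    FFalse
  | Eq "'f trm" "'f trm"
  | Rel 'r "'f trm list"
  | Neg "('f, 'r) fm"
  | Conj "('f, 'r) fm" "('f, 'r) fm"
  | Exi nat "('f, 'r) fm"

primrec evalt :: "('f \<Rightarrow> 'm list \<Rightarrow> 'm) \<Rightarrow> (nat \<Rightarrow> 'm) \<Rightarrow> 'f trm \<Rightarrow> 'm" where
  "evalt FI v (Var n) = v n"
| "evalt FI v (Fn f ts) = FI f (map (evalt FI v) ts)"

primrec fvt :: "'f trm \<Rightarrow> nat set" where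
  "fvt (Var n) = {n}"
| "fvt (Fn f ts) = \<Union> (set (map fvt ts))"

primrec sat :: "('f \<Rightarrow> 'm list \<Rightarrow> 'm) \<Rightarrow> ('r \<Rightarrow> 'm list \<Rightarrow> bool) \<Rightarrow> (nat \<Rightarrow> 'm)
                \<Rightarrow> ('f, 'r) fm \<Rightarrow> bool" where
  "sat FI RI v FFalse = False"
| "sat FI RI v (Eq s t) = (evalt FI v s = evalt FI v t)"
| "sat FI RI v (Rel r ts) = RI r (map (evalt FI v) ts)"
| "sat FI RI v (Neg \<phi>) = (\<not> sat FI RI v \<phi>)"
| "sat FI RI v (Conj \<phi> \<psi>) = (sat FI RI v \<phi> \<and> sat FI RI v \<psi>)"
| "sat FI RI v (Exi n \<phi>) = (\<exists>a. sat FI RI (v(n := a)) \<phi>)"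

primrec fv :: "('f, 'r) fm \<Rightarrow> nat set" where
  "fv FFalse = {}"
| "fv (Eq s t) = fvt s \<union> fvt t"
| "fv (Rel r ts) = \<Union> (set (map fvt ts))"
| "fv (Neg \<phi>) = fv \<phi>"
| "fv (Conj \<phi> \<psi>) = fv \<phi> \<union> fv \<psi>"
| "fv (Exi n \<phi>) = fv \<phi> - {n}"

text \<open>Tuples of M^n are lists of length n; the tuple a is the assignment i \<mapsto> a!i.
  A subset D of M^n is definable in M (with parameters) if it is defined by an L-formula
  phi(x_0..x_{n-1}, y_0..y_{m-1}) with a parameter tuple b \<in> M^m plugged in for y.\<close>

definition definable_set ::
  "('f \<Rightarrow> 'm list \<Rightarrow> 'm) \<Rightarrow> ('r \<Rightarrow> 'm list \<Rightarrow> bool) \<Rightarrow> nat \<Rightarrow> 'm list set \<Rightarrow> bool" where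
  "definable_set FI RI n D \<longleftrightarrow>
     (\<exists>(\<phi>::('f,'r) fm) b. fv \<phi> \<subseteq> {..<n + length b} \<and>
        D = {a. length a = n \<and> sat FI RI (\<lambda>i. (a @ b) ! i) \<phi>})"

text \<open>Definable (with parameters) subsets of the definable set G \<subseteq> M^k,
  i.e. the Boolean algebra of L(M)-formulas implying "x \<in> G", modulo equivalence in M.\<close>

definition def_subsets ::
  "('f \<Rightarrow> 'm list \<Rightarrow> 'm) \<Rightarrow> ('r \<Rightarrow> 'm list \<Rightarrow> bool) \<Rightarrow> nat \<Rightarrow> 'm list set \<Rightarrow> 'm list set set" where
  "def_subsets FI RI k G = {D. D \<subseteq> G \<and> definable_set FI RI k D}"

text \<open>Complete types over M containing the formula defining G, represented (Stone duality)
  as ultrafilters of the Boolean algebra of M-definable subsets of G: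
  p corresponds to the set of sets defined by the formulas of the type.\<close>

definition SG ::
  "('f \<Rightarrow> 'm list \<Rightarrow> 'm) \<Rightarrow> ('r \<Rightarrow> 'm list \<Rightarrow> bool) \<Rightarrow> nat \<Rightarrow> 'm list set \<Rightarrow> 'm list set set set" where
  "SG FI RI k G = {p. p \<subseteq> def_subsets FI RI k G \<and> G \<in> p \<and> {} \<notin> p
      \<and> (\<forall>D\<in>p. \<forall>E\<in>p. D \<inter> E \<in> p)
      \<and> (\<forall>D\<in>p. \<forall>E\<in>def_subsets FI RI k G. D \<subseteq> E \<longrightarrow> E \<in> p)
      \<and> (\<forall>D\<in>def_subsets FI RI k G. D \<in> p \<or> G - D \<in> p)}"

definition SG_top ::
  "('f \<Rightarrow> 'm list \<Rightarrow> 'm) \<Rightarrow> ('r \<Rightarrow> 'm list \<Rightarrow> bool) \<Rightarrow> nat \<Rightarrow> 'm list set \<Rightarrow> 'm list set set topology" where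
  "SG_top FI RI k G = topology_generated_by
     ((\<lambda>D. {p \<in> SG FI RI k G. D \<in> p}) ` def_subsets FI RI k G)"

definition tp ::
  "('f \<Rightarrow> 'm list \<Rightarrow> 'm) \<Rightarrow> ('r \<Rightarrow> 'm list \<Rightarrow> bool) \<Rightarrow> nat \<Rightarrow> 'm list set \<Rightarrow> 'm list \<Rightarrow> 'm list set set" where
  "tp FI RI k G a = {D \<in> def_subsets FI RI k G. a \<in> D}"

text \<open>The action g \<cdot> tp(a/M) = tp(ga/M): phi(x) \<in> g \<cdot> p iff phi(g x) \<in> p.\<close>

definition type_act ::
  "('f \<Rightarrow> 'm list \<Rightarrow> 'm) \<Rightarrow> ('r \<Rightarrow> 'm list \<Rightarrow> bool) \<Rightarrow> nat \<Rightarrow> ('m list, 'z) monoid_scheme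
     \<Rightarrow> 'm list \<Rightarrow> 'm list set set \<Rightarrow> 'm list set set" where
  "type_act FI RI k Gr g p =
     {D \<in> def_subsets FI RI k (carrier Gr). {x \<in> carrier Gr. g \<otimes>\<^bsub>Gr\<^esub> x \<in> D} \<in> p}"

text \<open>A type p \<in> S_G(M) is definable: for every L-formula phi(x,y) (x of length k,
  y of length m) the set {b \<in> M^m. phi(x,b) \<in> p} is definable in M.  Here
  phi(x,b) \<in> p iff the set it defines inside G belongs to p.\<close>

definition type_definable ::
  "('f \<Rightarrow> 'm list \<Rightarrow> 'm) \<Rightarrow> ('r \<Rightarrow> 'm list \<Rightarrow> bool) \<Rightarrow> nat \<Rightarrow> 'm list set \<Rightarrow> 'm list set set \<Rightarrow> bool" where
  "type_definable FI RI k G p \<longleftrightarrow>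
     (\<forall>(\<phi>::('f,'r) fm) m. fv \<phi> \<subseteq> {..<k + m} \<longrightarrow>
        definable_set FI RI m
          {b. length b = m \<and> {a \<in> G. sat FI RI (\<lambda>i. (a @ b) ! i) \<phi>} \<in> p})"

definition definable_map ::
  "('f \<Rightarrow> 'm list \<Rightarrow> 'm) \<Rightarrow> ('r \<Rightarrow> 'm list \<Rightarrow> bool) \<Rightarrow> nat \<Rightarrow> 'm list set
     \<Rightarrow> 'c topology \<Rightarrow> ('m list \<Rightarrow> 'c) \<Rightarrow> bool" where
  "definable_map FI RI k G C f \<longleftrightarrow>
     (\<forall>C1 C2. closedin C C1 \<and> closedin C C2 \<and> C1 \<inter> C2 = {} \<longrightarrow>
        (\<exists>Y. Y \<subseteq> G \<and> definable_set FI RI k Y \<and>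
             {g \<in> G. f g \<in> C1} \<subseteq> Y \<and> Y \<inter> {g \<in> G. f g \<in> C2} = {}))"

definition definable_flow ::
  "('f \<Rightarrow> 'm list \<Rightarrow> 'm) \<Rightarrow> ('r \<Rightarrow> 'm list \<Rightarrow> bool) \<Rightarrow> nat \<Rightarrow> ('m list, 'z) monoid_scheme
     \<Rightarrow> 'x topology \<Rightarrow> ('m list \<Rightarrow> 'x \<Rightarrow> 'x) \<Rightarrow> bool" where
  "definable_flow FI RI k Gr X act \<longleftrightarrow>
     compact_space X \<and> Hausdorff_space X
     \<and> (\<forall>g\<in>carrier Gr. homeomorphic_map X X (act g))
     \<and> (\<forall>x\<in>topspace X. act \<one>\<^bsub>Gr\<^esub> x = x)
     \<and> (\<forall>g\<in>carrier Gr. \<forall>h\<in>carrier Gr. \<forall>x\<in>topspace X.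
            act (g \<otimes>\<^bsub>Gr\<^esub> h) x = act g (act h x))
     \<and> (\<forall>x\<in>topspace X. definable_map FI RI k (carrier Gr) X (\<lambda>g. act g x))"

definition definable_ambit ::
  "('f \<Rightarrow> 'm list \<Rightarrow> 'm) \<Rightarrow> ('r \<Rightarrow> 'm list \<Rightarrow> bool) \<Rightarrow> nat \<Rightarrow> ('m list, 'z) monoid_scheme
     \<Rightarrow> 'x topology \<Rightarrow> ('m list \<Rightarrow> 'x \<Rightarrow> 'x) \<Rightarrow> 'x \<Rightarrow> bool" where
  "definable_ambit FI RI k Gr X act x0 \<longleftrightarrow>
     definable_flow FI RI k Gr X act \<and> x0 \<in> topspace X
     \<and> X closure_of ((\<lambda>g. act g x0) ` carrier Gr) = topspace X"

definition definable_group ::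
  "('f \<Rightarrow> 'm list \<Rightarrow> 'm) \<Rightarrow> ('r \<Rightarrow> 'm list \<Rightarrow> bool) \<Rightarrow> nat \<Rightarrow> ('m list, 'z) monoid_scheme \<Rightarrow> bool" where
  "definable_group FI RI k Gr \<longleftrightarrow>
     group Gr \<and> definable_set FI RI k (carrier Gr)
     \<and> definable_set FI RI (3 * k)
          {a @ b @ c | a b c. a \<in> carrier Gr \<and> b \<in> carrier Gr \<and> c = a \<otimes>\<^bsub>Gr\<^esub> b}"

end

theory Submission
  imports Defs
begin

text \<open>Complete types over M in S_G(M) are the ultrafilters of the Boolean algebra of
  M-definable subsets of G, so S_G(M) is its Stone space: compact, Hausdorff, and with a
  clopen basis. Left translates of definable sets are definable (the graph of the
  multiplication is), so G acts on S_G(M) by homeomorphisms, and the realized types are dense.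
  If every type is definable, then for each type p and each clopen set [E] the set of g with
  g p \<in> [E] is definable, which makes (S_G(M), tp(1/M)) a definable ambit.

  For a definable ambit (X, x0) send p to the point h(p) lying in the closure of
  {g x0 | g \<in> D} for every D \<in> p. Such a point exists by compactness of X. Every
  neighbourhood of it contains {g x0 | g \<in> D} for some D \<in> p, because X is regular and the
  definability of g \<mapsto> g x0 separates disjoint closed sets by a definable set and its
  complement; this gives uniqueness and continuity of h. Equivariance holds because each g
  acts on X by a homeomorphism, and h(tp(g/M)) = g x0. The image of h is compact and
  contains the dense orbit, so h is onto, and any other such map agrees with h on the dense
  set of realized types.\<close>

section \<open>Definable sets\<close>

lemma finite_fvt: "finite (fvt t)"
  by (induct t) auto

lemma finite_fv: "finite (fv \<phi>)"
  by (induct \<phi>) (auto simp: finite_fvt)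

lemma evalt_cong: "(\<And>i. i \<in> fvt t \<Longrightarrow> v i = v' i) \<Longrightarrow> evalt FI v t = evalt FI v' t"
proof (induct t)
  case (Fn f ts)
  then have "map (evalt FI v) ts = map (evalt FI v') ts" by auto
  then show ?case by (simp del: map_eq_conv)
qed simp

lemma sat_cong: "(\<And>i. i \<in> fv \<phi> \<Longrightarrow> v i = v' i) \<Longrightarrow> sat FI RI v \<phi> = sat FI RI v' \<phi>"
proof (induct \<phi> arbitrary: v v')
  case (Eq s t)
  then show ?case using evalt_cong[of s v v' FI] evalt_cong[of t v v' FI] by auto
next
  case (Rel r ts)
  then have "map (evalt FI v) ts = map (evalt FI v') ts"
    by (auto intro!: evalt_cong)
  then show ?case by (simp del: map_eq_conv)
next
  case (Exi n \<phi>)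
  have "sat FI RI (v(n := a)) \<phi> = sat FI RI (v'(n := a)) \<phi>" for a
    using Exi(2) by (intro Exi(1)) auto
  then show ?case by simp
next
  case (Conj \<phi> \<psi>)
  have "sat FI RI v \<phi> = sat FI RI v' \<phi>" "sat FI RI v \<psi> = sat FI RI v' \<psi>"
    using Conj(3) by (intro Conj(1), simp, intro Conj(2), simp)
  then show ?case by simp
next
  case (Neg \<phi>)
  then show ?case by (metis fv.simps(4) sat.simps(4))
qed simp_all

primrec rename_trm :: "(nat \<Rightarrow> nat) \<Rightarrow> 'f trm \<Rightarrow> 'f trm" where
  "rename_trm \<sigma> (Var n) = Var (\<sigma> n)"
| "rename_trm \<sigma> (Fn f ts) = Fn f (map (rename_trm \<sigma>) ts)"

lemma evalt_rename_trm: "evalt FI v (rename_trm \<sigma> t) = evalt FI (v \<circ> \<sigma>) t"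
proof (induct t)
  case (Fn f ts)
  then have "map (evalt FI v \<circ> rename_trm \<sigma>) ts = map (evalt FI (v \<circ> \<sigma>)) ts"
    by (auto simp: comp_def)
  then show ?case by (simp del: map_eq_conv add: comp_def)
qed simp

lemma fvt_rename_trm: "fvt (rename_trm \<sigma> t) = \<sigma> ` fvt t"
  by (induct t) auto

text \<open>A quantified variable is renamed to a fresh one above the images of all free
  variables of the body, so that no capture occurs.\<close>

primrec rename_fm :: "(nat \<Rightarrow> nat) \<Rightarrow> ('f, 'r) fm \<Rightarrow> ('f, 'r) fm" where
  "rename_fm \<sigma> FFalse = FFalse"
| "rename_fm \<sigma> (Eq s t) = Eq (rename_trm \<sigma> s) (rename_trm \<sigma> t)"
| "rename_fm \<sigma> (Rel r ts) = Rel r (map (rename_trm \<sigma>) ts)"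
| "rename_fm \<sigma> (Neg \<phi>) = Neg (rename_fm \<sigma> \<phi>)"
| "rename_fm \<sigma> (Conj \<phi> \<psi>) = Conj (rename_fm \<sigma> \<phi>) (rename_fm \<sigma> \<psi>)"
| "rename_fm \<sigma> (Exi n \<phi>) =
     (let n' = Suc (Max (insert 0 (\<sigma> ` fv \<phi>))) in Exi n' (rename_fm (\<sigma>(n := n')) \<phi>))"

lemma sat_rename_fm: "sat FI RI v (rename_fm \<sigma> \<phi>) = sat FI RI (v \<circ> \<sigma>) \<phi>"
proof (induct \<phi> arbitrary: \<sigma> v)
  case (Exi n \<phi>)
  define n' where "n' = Suc (Max (insert 0 (\<sigma> ` fv \<phi>)))"
  have fresh: "\<sigma> i < n'" if "i \<in> fv \<phi>" for i
    unfolding n'_def using finite_fv[of \<phi>] that by (simp add: le_imp_less_Suc)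
  have "sat FI RI (v(n' := a) \<circ> \<sigma>(n := n')) \<phi> = sat FI RI ((v \<circ> \<sigma>)(n := a)) \<phi>" for a
    by (rule sat_cong) (auto dest: fresh)
  then have "(\<exists>a. sat FI RI (v(n' := a)) (rename_fm (\<sigma>(n := n')) \<phi>)) =
      (\<exists>a. sat FI RI ((v \<circ> \<sigma>)(n := a)) \<phi>)"
    by (simp only: Exi)
  then show ?case by (simp add: n'_def[symmetric] Let_def comp_def)
qed (auto simp: evalt_rename_trm comp_def)

lemma fv_rename_fm: "fv (rename_fm \<sigma> \<phi>) \<subseteq> \<sigma> ` fv \<phi>"
proof (induct \<phi> arbitrary: \<sigma>)
  case (Exi n \<phi>)
  define n' where "n' = Suc (Max (insert 0 (\<sigma> ` fv \<phi>)))"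
  have "fv (rename_fm (\<sigma>(n := n')) \<phi>) \<subseteq> (\<sigma>(n := n')) ` fv \<phi>"
    by (rule Exi)
  moreover have "(\<sigma>(n := n')) ` fv \<phi> - {n'} \<subseteq> \<sigma> ` (fv \<phi> - {n})"
    by auto
  ultimately have "fv (rename_fm (\<sigma>(n := n')) \<phi>) - {n'} \<subseteq> \<sigma> ` (fv \<phi> - {n})"
    by blast
  then show ?case by (simp add: n'_def[symmetric] Let_def)
next
  case (Conj \<phi> \<psi>)
  have "fv (rename_fm \<sigma> \<phi>) \<subseteq> \<sigma> ` fv \<phi>" "fv (rename_fm \<sigma> \<psi>) \<subseteq> \<sigma> ` fv \<psi>"
    by (fact Conj(1), fact Conj(2))
  then show ?case by auto
qed (auto simp: fvt_rename_trm)

definition exi_list :: "nat list \<Rightarrow> ('f, 'r) fm \<Rightarrow> ('f, 'r) fm" where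
  "exi_list is \<phi> = foldr Exi is \<phi>"

lemma sat_exi_list:
  "sat FI RI v (exi_list is \<phi>) \<longleftrightarrow> (\<exists>f. sat FI RI (\<lambda>j. if j \<in> set is then f j else v j) \<phi>)"
proof (induct "is" arbitrary: v)
  case Nil
  then show ?case by (simp add: exi_list_def)
next
  case (Cons i "is")
  have shift: "(\<lambda>j. if j \<in> set is then f j else (v(i := a)) j) =
      (\<lambda>j. if j \<in> set (i # is) then (if j \<in> set is then f j else a) else v j)" for f a
    by auto
  have "sat FI RI v (exi_list (i # is) \<phi>) \<longleftrightarrow>
      (\<exists>a f. sat FI RI (\<lambda>j. if j \<in> set is then f j else (v(i := a)) j) \<phi>)"
    using Cons by (simp add: exi_list_def)
  also have "\<dots> \<longleftrightarrow> (\<exists>f. sat FI RI (\<lambda>j. if j \<in> set (i # is) then f j else v j) \<phi>)"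
  proof
    assume "\<exists>a f. sat FI RI (\<lambda>j. if j \<in> set is then f j else (v(i := a)) j) \<phi>"
    then obtain a f where "sat FI RI (\<lambda>j. if j \<in> set is then f j else (v(i := a)) j) \<phi>"
      by blast
    then show "\<exists>f. sat FI RI (\<lambda>j. if j \<in> set (i # is) then f j else v j) \<phi>"
      unfolding shift by (rule exI[of _ "\<lambda>j. if j \<in> set is then f j else a"])
  next
    assume "\<exists>f. sat FI RI (\<lambda>j. if j \<in> set (i # is) then f j else v j) \<phi>"
    then obtain g where g: "sat FI RI (\<lambda>j. if j \<in> set (i # is) then g j else v j) \<phi>"
      by blast
    have eq: "(\<lambda>j. if j \<in> set (i # is) then (if j \<in> set is then g j else g i) else v j) =
        (\<lambda>j. if j \<in> set (i # is) then g j else v j)"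
      by auto
    show "\<exists>a f. sat FI RI (\<lambda>j. if j \<in> set is then f j else (v(i := a)) j) \<phi>"
      unfolding shift by (intro exI[of _ "g i"] exI[of _ g]) (simp only: eq g)
  qed
  finally show ?case .
qed

lemma fv_exi_list: "fv (exi_list is \<phi>) = fv \<phi> - set is"
  by (induct "is") (auto simp: exi_list_def)

lemma definable_set_length: "definable_set FI RI n D \<Longrightarrow> a \<in> D \<Longrightarrow> length a = n"
  unfolding definable_set_def by auto

lemma definable_set_fix_suffix:
  assumes "definable_set FI RI (n + m) D" "length c = m"
  shows "definable_set FI RI n {a. length a = n \<and> a @ c \<in> D}"
proof -
  obtain \<phi> b where fv: "fv \<phi> \<subseteq> {..<n + m + length b}"
    and D: "D = {a. length a = n + m \<and> sat FI RI (\<lambda>i. (a @ b) ! i) \<phi>}"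
    using assms(1) unfolding definable_set_def by blast
  have "{a. length a = n \<and> a @ c \<in> D} = {a. length a = n \<and> sat FI RI (\<lambda>i. (a @ c @ b) ! i) \<phi>}"
    using assms(2) by (auto simp: D)
  moreover have "fv \<phi> \<subseteq> {..<n + length (c @ b)}"
    using fv assms(2) by auto
  ultimately show ?thesis
    unfolding definable_set_def by blast
qed

lemma definable_set_compl:
  assumes "definable_set FI RI n D"
  shows "definable_set FI RI n ({a. length a = n} - D)"
proof -
  obtain \<phi> b where fv: "fv \<phi> \<subseteq> {..<n + length b}"
    and D: "D = {a. length a = n \<and> sat FI RI (\<lambda>i. (a @ b) ! i) \<phi>}"
    using assms unfolding definable_set_def by blast
  have "{a. length a = n} - D = {a. length a = n \<and> sat FI RI (\<lambda>i. (a @ b) ! i) (Neg \<phi>)}"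
    by (auto simp: D)
  moreover have "fv (Neg \<phi>) \<subseteq> {..<n + length b}"
    using fv by simp
  ultimately show ?thesis
    unfolding definable_set_def by blast
qed

lemma definable_set_Int:
  assumes "definable_set FI RI n D1" "definable_set FI RI n D2"
  shows "definable_set FI RI n (D1 \<inter> D2)"
proof -
  obtain \<phi>1 b1 where fv1: "fv \<phi>1 \<subseteq> {..<n + length b1}"
    and D1: "D1 = {a. length a = n \<and> sat FI RI (\<lambda>i. (a @ b1) ! i) \<phi>1}"
    using assms(1) unfolding definable_set_def by blast
  obtain \<phi>2 b2 where fv2: "fv \<phi>2 \<subseteq> {..<n + length b2}"
    and D2: "D2 = {a. length a = n \<and> sat FI RI (\<lambda>i. (a @ b2) ! i) \<phi>2}"
    using assms(2) unfolding definable_set_def by blast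
  define \<sigma> where "\<sigma> i = (if i < n then i else i + length b1)" for i
  define \<psi> where "\<psi> = Conj \<phi>1 (rename_fm \<sigma> \<phi>2)"
  have "fv (rename_fm \<sigma> \<phi>2) \<subseteq> \<sigma> ` {..<n + length b2}"
    using fv_rename_fm[of \<sigma> \<phi>2] fv2 by blast
  also have "\<dots> \<subseteq> {..<n + length (b1 @ b2)}"
    by (auto simp: \<sigma>_def)
  finally have fv: "fv \<psi> \<subseteq> {..<n + length (b1 @ b2)}"
    using fv1 by (auto simp: \<psi>_def)
  have "a \<in> D1 \<inter> D2 \<longleftrightarrow> sat FI RI (\<lambda>i. (a @ b1 @ b2) ! i) \<psi>" if "length a = n" for a
  proof -
    have "sat FI RI (\<lambda>i. (a @ b1 @ b2) ! i) \<phi>1 = sat FI RI (\<lambda>i. (a @ b1) ! i) \<phi>1"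
      using fv1 that by (intro sat_cong) (auto simp: nth_append)
    moreover have "sat FI RI ((\<lambda>i. (a @ b1 @ b2) ! i) \<circ> \<sigma>) \<phi>2 = sat FI RI (\<lambda>i. (a @ b2) ! i) \<phi>2"
      using fv2 that by (intro sat_cong) (auto simp: nth_append \<sigma>_def)
    ultimately show ?thesis
      using that by (simp add: D1 D2 \<psi>_def sat_rename_fm)
  qed
  then have "D1 \<inter> D2 = {a. length a = n \<and> sat FI RI (\<lambda>i. (a @ b1 @ b2) ! i) \<psi>}"
    by (auto simp: D1)
  with fv show ?thesis
    unfolding definable_set_def by blast
qed

lemma definable_set_coordinates:
  assumes "definable_set FI RI m D" and js: "length js = m" "\<forall>j\<in>set js. j < n"
  shows "definable_set FI RI n {a. length a = n \<and> map ((!) a) js \<in> D}"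
proof -
  obtain \<phi> b where fv: "fv \<phi> \<subseteq> {..<m + length b}"
    and D: "D = {a. length a = m \<and> sat FI RI (\<lambda>i. (a @ b) ! i) \<phi>}"
    using assms(1) unfolding definable_set_def by blast
  define \<sigma> where "\<sigma> i = (if i < m then js ! i else n + (i - m))" for i
  have "fv (rename_fm \<sigma> \<phi>) \<subseteq> \<sigma> ` {..<m + length b}"
    using fv_rename_fm[of \<sigma> \<phi>] fv by blast
  also have "\<dots> \<subseteq> {..<n + length b}"
    using js(1) js(2)[rule_format, OF nth_mem] by (fastforce simp: \<sigma>_def)
  finally have fv': "fv (rename_fm \<sigma> \<phi>) \<subseteq> {..<n + length b}" .
  have "map ((!) a) js \<in> D \<longleftrightarrow> sat FI RI (\<lambda>i. (a @ b) ! i) (rename_fm \<sigma> \<phi>)"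
    if "length a = n" for a
  proof -
    have "sat FI RI ((\<lambda>i. (a @ b) ! i) \<circ> \<sigma>) \<phi> = sat FI RI (\<lambda>i. (map ((!) a) js @ b) ! i) \<phi>"
      using fv js that by (intro sat_cong) (auto simp: \<sigma>_def nth_append)
    then show ?thesis
      using js by (simp add: D sat_rename_fm)
  qed
  then have "{a. length a = n \<and> map ((!) a) js \<in> D} =
      {a. length a = n \<and> sat FI RI (\<lambda>i. (a @ b) ! i) (rename_fm \<sigma> \<phi>)}"
    by blast
  with fv' show ?thesis
    unfolding definable_set_def by blast
qed

lemma definable_set_project:
  assumes "definable_set FI RI (n + m) D"
  shows "definable_set FI RI n {a. length a = n \<and> (\<exists>b. length b = m \<and> a @ b \<in> D)}"
proof -
  obtain \<phi> c where fv: "fv \<phi> \<subseteq> {..<n + m + length c}"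
    and D: "D = {w. length w = n + m \<and> sat FI RI (\<lambda>i. (w @ c) ! i) \<phi>}"
    using assms unfolding definable_set_def by blast
  define P where "P = n + length c"
  \<comment> \<open>the projected block moves to the fresh variables P.., the parameters move down to n..\<close>
  define \<sigma> where "\<sigma> i = (if i < n then i else if i < n + m then P + (i - n) else n + (i - (n + m)))"
    for i
  define \<psi> where "\<psi> = exi_list [P..<P + m] (rename_fm \<sigma> \<phi>)"
  have "fv (rename_fm \<sigma> \<phi>) \<subseteq> \<sigma> ` {..<n + m + length c}"
    using fv_rename_fm[of \<sigma> \<phi>] fv by blast
  also have "\<dots> \<subseteq> {..<P + m}"
    by (auto simp: \<sigma>_def P_def)
  finally have fv': "fv \<psi> \<subseteq> {..<n + length c}"
    by (auto simp: \<psi>_def fv_exi_list P_def)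
  have "sat FI RI (\<lambda>i. (a @ c) ! i) \<psi> \<longleftrightarrow> (\<exists>b. length b = m \<and> a @ b \<in> D)"
    if a: "length a = n" for a
  proof -
    have val: "((\<lambda>j. if j \<in> set [P..<P + m] then f j else (a @ c) ! j) \<circ> \<sigma>) i =
        ((a @ map f [P..<P + m]) @ c) ! i" if "i < n + m + length c" for i f
    proof (cases "i < n")
      case False
      then show ?thesis
        using that a by (cases "i < n + m") (auto simp: \<sigma>_def P_def nth_append add.commute)
    qed (use a in \<open>simp add: \<sigma>_def P_def nth_append\<close>)
    then have "sat FI RI ((\<lambda>j. if j \<in> set [P..<P + m] then f j else (a @ c) ! j) \<circ> \<sigma>) \<phi> \<longleftrightarrow>
        sat FI RI (\<lambda>i. ((a @ map f [P..<P + m]) @ c) ! i) \<phi>" for f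
      using fv by (intro sat_cong val) auto
    then have "sat FI RI (\<lambda>i. (a @ c) ! i) \<psi> \<longleftrightarrow>
        (\<exists>f. sat FI RI (\<lambda>i. ((a @ map f [P..<P + m]) @ c) ! i) \<phi>)"
      by (simp add: \<psi>_def sat_exi_list sat_rename_fm)
    also have "\<dots> \<longleftrightarrow> (\<exists>b. length b = m \<and> sat FI RI (\<lambda>i. ((a @ b) @ c) ! i) \<phi>)"
    proof
      assume "\<exists>f. sat FI RI (\<lambda>i. ((a @ map f [P..<P + m]) @ c) ! i) \<phi>"
      then obtain f where "sat FI RI (\<lambda>i. ((a @ map f [P..<P + m]) @ c) ! i) \<phi>"
        by blast
      then show "\<exists>b. length b = m \<and> sat FI RI (\<lambda>i. ((a @ b) @ c) ! i) \<phi>"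
        by (intro exI[of _ "map f [P..<P + m]"]) simp
    next
      assume "\<exists>b. length b = m \<and> sat FI RI (\<lambda>i. ((a @ b) @ c) ! i) \<phi>"
      then obtain b where "length b = m" "sat FI RI (\<lambda>i. ((a @ b) @ c) ! i) \<phi>"
        by blast
      moreover from \<open>length b = m\<close> have "map (\<lambda>j. b ! (j - P)) [P..<P + m] = b"
        by (auto intro: nth_equalityI)
      ultimately show "\<exists>f. sat FI RI (\<lambda>i. ((a @ map f [P..<P + m]) @ c) ! i) \<phi>"
        by metis
    qed
    also have "\<dots> \<longleftrightarrow> (\<exists>b. length b = m \<and> a @ b \<in> D)"
      using a by (auto simp: D)
    finally show ?thesis .
  qed
  then have "{a. length a = n \<and> (\<exists>b. length b = m \<and> a @ b \<in> D)} =
      {a. length a = n \<and> sat FI RI (\<lambda>i. (a @ c) ! i) \<psi>}"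
    by blast
  with fv' show ?thesis
    unfolding definable_set_def by blast
qed

lemma type_definable_fiber:
  assumes p: "type_definable FI RI k G p" and G: "\<And>a. a \<in> G \<Longrightarrow> length a = k"
    and "definable_set FI RI (k + n) T"
  shows "definable_set FI RI n {b. length b = n \<and> {a \<in> G. a @ b \<in> T} \<in> p}"
proof -
  obtain \<psi> c where fv: "fv \<psi> \<subseteq> {..<k + (n + length c)}"
    and T: "T = {w. length w = k + n \<and> sat FI RI (\<lambda>i. (w @ c) ! i) \<psi>}"
    using assms(3) unfolding definable_set_def by (auto simp: add.assoc)
  let ?S = "{b. length b = n + length c \<and> {a \<in> G. sat FI RI (\<lambda>i. (a @ b) ! i) \<psi>} \<in> p}"
  have "definable_set FI RI (n + length c) ?S"
    using p fv unfolding type_definable_def by blast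
  then have "definable_set FI RI n {b. length b = n \<and> b @ c \<in> ?S}"
    by (rule definable_set_fix_suffix) simp
  moreover have "{a \<in> G. sat FI RI (\<lambda>i. (a @ b @ c) ! i) \<psi>} = {a \<in> G. a @ b \<in> T}"
    if "length b = n" for b
    using G that by (auto simp: T)
  then have "{b. length b = n \<and> b @ c \<in> ?S} = {b. length b = n \<and> {a \<in> G. a @ b \<in> T} \<in> p}"
    by auto
  ultimately show ?thesis
    by simp
qed

section \<open>Stone spaces of algebras of sets\<close>

definition set_filter :: "'a set \<Rightarrow> 'a set set \<Rightarrow> 'a set set \<Rightarrow> bool" where
  "set_filter \<Omega> M F \<longleftrightarrow> F \<subseteq> M \<and> \<Omega> \<in> F \<and> {} \<notin> F \<and> (\<forall>D\<in>F. \<forall>E\<in>F. D \<inter> E \<in> F)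
     \<and> (\<forall>D\<in>F. \<forall>E\<in>M. D \<subseteq> E \<longrightarrow> E \<in> F)"

definition stone_space :: "'a set \<Rightarrow> 'a set set \<Rightarrow> 'a set set set" where
  "stone_space \<Omega> M = {p. set_filter \<Omega> M p \<and> (\<forall>D\<in>M. D \<in> p \<or> \<Omega> - D \<in> p)}"

definition stone_basic :: "'a set \<Rightarrow> 'a set set \<Rightarrow> 'a set \<Rightarrow> 'a set set set" where
  "stone_basic \<Omega> M D = {p \<in> stone_space \<Omega> M. D \<in> p}"

definition stone_topology :: "'a set \<Rightarrow> 'a set set \<Rightarrow> 'a set set topology" where
  "stone_topology \<Omega> M = topology_generated_by (stone_basic \<Omega> M ` M)"

lemma set_filterD:
  assumes "set_filter \<Omega> M F"
  shows "F \<subseteq> M" "\<Omega> \<in> F" "{} \<notin> F" "D \<in> F \<Longrightarrow> E \<in> F \<Longrightarrow> D \<inter> E \<in> F"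
    "D \<in> F \<Longrightarrow> E \<in> M \<Longrightarrow> D \<subseteq> E \<Longrightarrow> E \<in> F"
  using assms unfolding set_filter_def by blast+

context algebra
begin

lemma stone_spaceD:
  assumes "p \<in> stone_space \<Omega> M"
  shows "p \<subseteq> M" "\<Omega> \<in> p" "{} \<notin> p" "D \<in> p \<Longrightarrow> E \<in> p \<Longrightarrow> D \<inter> E \<in> p"
    "D \<in> p \<Longrightarrow> E \<in> M \<Longrightarrow> D \<subseteq> E \<Longrightarrow> E \<in> p" "D \<in> M \<Longrightarrow> D \<in> p \<or> \<Omega> - D \<in> p"
  using assms unfolding stone_space_def set_filter_def by blast+

lemma stone_space_compl_iff:
  assumes "p \<in> stone_space \<Omega> M" "D \<in> M"
  shows "\<Omega> - D \<in> p \<longleftrightarrow> D \<notin> p"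
proof -
  have "\<not> (D \<in> p \<and> \<Omega> - D \<in> p)"
  proof
    assume "D \<in> p \<and> \<Omega> - D \<in> p"
    then have "D \<inter> (\<Omega> - D) \<in> p"
      using stone_spaceD(4)[OF assms(1)] by blast
    then show False
      using stone_spaceD(3)[OF assms(1)] by simp
  qed
  then show ?thesis
    using stone_spaceD(6)[OF assms] by blast
qed

lemma stone_space_finite_Inter:
  assumes p: "p \<in> stone_space \<Omega> M"
  shows "finite F \<Longrightarrow> F \<subseteq> p \<Longrightarrow> \<Omega> \<inter> \<Inter>F \<in> p"
proof (induct F rule: finite_induct)
  case empty
  then show ?case using stone_spaceD(2)[OF p] by simp
next
  case (insert D F)
  have "\<Omega> \<inter> \<Inter>(insert D F) = D \<inter> (\<Omega> \<inter> \<Inter>F)"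
    using insert.prems stone_spaceD(1)[OF p] sets_into_space by blast
  then show ?case
    using insert stone_spaceD(4)[OF p] by simp
qed

lemma stone_space_finite_Union:
  assumes p: "p \<in> stone_space \<Omega> M" and F: "finite F" "F \<subseteq> M" "\<Union>F \<in> p"
  shows "\<exists>D\<in>F. D \<in> p"
proof (rule ccontr)
  assume none: "\<not> (\<exists>D\<in>F. D \<in> p)"
  have "(\<lambda>D. \<Omega> - D) ` F \<subseteq> p"
  proof (rule image_subsetI)
    fix D assume "D \<in> F"
    then show "\<Omega> - D \<in> p"
      using none F(2) stone_space_compl_iff[OF p, of D] by blast
  qed
  then have "\<Omega> \<inter> \<Inter>((\<lambda>D. \<Omega> - D) ` F) \<in> p"
    by (rule stone_space_finite_Inter[OF p, rotated]) (simp add: F(1))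
  then have "\<Omega> \<inter> \<Inter>((\<lambda>D. \<Omega> - D) ` F) \<inter> \<Union>F \<in> p"
    using stone_spaceD(4)[OF p] F(3) by blast
  moreover have "\<Omega> \<inter> \<Inter>((\<lambda>D. \<Omega> - D) ` F) \<inter> \<Union>F = {}"
    by auto
  ultimately show False
    using stone_spaceD(3)[OF p] by simp
qed

lemma stone_space_eqI:
  assumes p: "p \<in> stone_space \<Omega> M" and q: "q \<in> stone_space \<Omega> M" and "p \<subseteq> q"
  shows "p = q"
proof -
  have "D \<in> p" if "D \<in> q" for D
    using that assms stone_space_compl_iff stone_spaceD(1) by blast
  then show ?thesis
    using assms by blast
qed

lemma set_filter_Union_chain:
  assumes "C \<noteq> {}" "\<And>F. F \<in> C \<Longrightarrow> set_filter \<Omega> M F"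
    and chain: "\<And>F F'. F \<in> C \<Longrightarrow> F' \<in> C \<Longrightarrow> F \<subseteq> F' \<or> F' \<subseteq> F"
  shows "set_filter \<Omega> M (\<Union>C)"
  unfolding set_filter_def
proof (intro conjI ballI impI)
  show "\<Union>C \<subseteq> M" "\<Omega> \<in> \<Union>C" "{} \<notin> \<Union>C"
    using assms(1,2) unfolding set_filter_def by blast+
  show "D \<inter> E \<in> \<Union>C" if DE: "D \<in> \<Union>C" "E \<in> \<Union>C" for D E
  proof -
    obtain F F' where F: "F \<in> C" "F' \<in> C" and "D \<in> F" "E \<in> F'"
      using DE by blast
    then have "D \<inter> E \<in> F \<or> D \<inter> E \<in> F'"
      using chain[OF F] set_filterD(4)[OF assms(2)[OF F(1)]] set_filterD(4)[OF assms(2)[OF F(2)]]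
      by blast
    then show ?thesis
      using F by blast
  qed
  show "E \<in> \<Union>C" if "D \<in> \<Union>C" "E \<in> M" "D \<subseteq> E" for D E
    using that assms(2) unfolding set_filter_def by blast
qed

lemma set_filter_adjoin:
  assumes F: "set_filter \<Omega> M F" and D: "D \<in> M" "\<Omega> - D \<notin> F"
  shows "set_filter \<Omega> M {E \<in> M. \<exists>Q\<in>F. Q \<inter> D \<subseteq> E}"
  unfolding set_filter_def
proof (intro conjI ballI impI)
  have "Q \<inter> D \<noteq> {}" if Q: "Q \<in> F" for Q
  proof
    assume "Q \<inter> D = {}"
    then have "Q \<subseteq> \<Omega> - D"
      using set_filterD(1)[OF F] Q sets_into_space by blast
    then show False
      using set_filterD(5)[OF F Q] D compl_sets by blast
  qed
  then show "{} \<notin> {E \<in> M. \<exists>Q\<in>F. Q \<inter> D \<subseteq> E}"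
    by blast
  show "\<Omega> \<in> {E \<in> M. \<exists>Q\<in>F. Q \<inter> D \<subseteq> E}"
    using set_filterD(2)[OF F] by blast
  show "E1 \<inter> E2 \<in> {E \<in> M. \<exists>Q\<in>F. Q \<inter> D \<subseteq> E}"
    if E: "E1 \<in> {E \<in> M. \<exists>Q\<in>F. Q \<inter> D \<subseteq> E}" "E2 \<in> {E \<in> M. \<exists>Q\<in>F. Q \<inter> D \<subseteq> E}" for E1 E2
  proof -
    obtain Q1 Q2 where Q: "Q1 \<in> F" "Q2 \<in> F" and "Q1 \<inter> D \<subseteq> E1" "Q2 \<inter> D \<subseteq> E2"
      using E by blast
    then have "Q1 \<inter> Q2 \<in> F" "Q1 \<inter> Q2 \<inter> D \<subseteq> E1 \<inter> E2"
      using set_filterD(4)[OF F Q] by blast+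
    then show ?thesis
      using E by blast
  qed
qed auto

lemma ex_stone_space_supset_filter:
  assumes "set_filter \<Omega> M F"
  shows "\<exists>p\<in>stone_space \<Omega> M. F \<subseteq> p"
proof -
  let ?A = "{q. set_filter \<Omega> M q \<and> F \<subseteq> q}"
  have "\<exists>U\<in>?A. \<forall>X\<in>?A. U \<subseteq> X \<longrightarrow> X = U"
  proof (rule subset_Zorn_nonempty)
    show "?A \<noteq> {}"
      using assms by blast
    show "\<Union>C \<in> ?A" if C: "C \<noteq> {}" "subset.chain ?A C" for C
    proof -
      have CA: "C \<subseteq> ?A" and "\<And>X Y. X \<in> C \<Longrightarrow> Y \<in> C \<Longrightarrow> X \<subseteq> Y \<or> Y \<subseteq> X"
        using C(2) unfolding subset.chain_def by (blast, blast)
      then have "set_filter \<Omega> M (\<Union>C)"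
        using set_filter_Union_chain[OF C(1)] by blast
      moreover have "F \<subseteq> \<Union>C"
        using C(1) CA by blast
      ultimately show ?thesis
        by blast
    qed
  qed
  then obtain U where UA: "U \<in> ?A" and max: "\<forall>X\<in>?A. U \<subseteq> X \<longrightarrow> X = U" ..
  from UA have U: "set_filter \<Omega> M U" "F \<subseteq> U"
    by simp_all
  have "D \<in> U \<or> \<Omega> - D \<in> U" if D: "D \<in> M" for D
  proof (rule ccontr)
    assume neither: "\<not> (D \<in> U \<or> \<Omega> - D \<in> U)"
    let ?U' = "{E \<in> M. \<exists>Q\<in>U. Q \<inter> D \<subseteq> E}"
    have "?U' \<in> ?A"
      using set_filter_adjoin[OF U(1) D] neither U(2) set_filterD(1)[OF U(1)] by blast
    moreover have "U \<subseteq> ?U'"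
      using set_filterD(1)[OF U(1)] by blast
    ultimately have "?U' = U"
      by (rule max[rule_format])
    moreover have "D \<in> ?U'"
      using set_filterD(2)[OF U(1)] D by blast
    ultimately show False
      using neither by simp
  qed
  then have "U \<in> stone_space \<Omega> M"
    using U(1) unfolding stone_space_def by blast
  then show ?thesis
    using U(2) by blast
qed

lemma ex_stone_space_supset_fip:
  assumes K: "K \<subseteq> M" and fip: "\<And>F. finite F \<Longrightarrow> F \<subseteq> K \<Longrightarrow> \<Omega> \<inter> \<Inter>F \<noteq> {}"
  shows "\<exists>p\<in>stone_space \<Omega> M. K \<subseteq> p"
proof -
  define \<F> where "\<F> = {E \<in> M. \<exists>F. finite F \<and> F \<subseteq> K \<and> \<Omega> \<inter> \<Inter>F \<subseteq> E}"
  have "set_filter \<Omega> M \<F>"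
    unfolding set_filter_def
  proof (intro conjI ballI impI)
    show "\<F> \<subseteq> M"
      by (simp add: \<F>_def)
    show "{} \<notin> \<F>"
    proof
      assume "{} \<in> \<F>"
      then obtain F where F: "finite F" "F \<subseteq> K" and "\<Omega> \<inter> \<Inter>F \<subseteq> {}"
        unfolding \<F>_def by blast
      then show False
        using fip[OF F] by blast
    qed
    show "\<Omega> \<in> \<F>"
      unfolding \<F>_def by (intro CollectI conjI exI[of _ "{}"]) auto
    show "E1 \<inter> E2 \<in> \<F>" if "E1 \<in> \<F>" "E2 \<in> \<F>" for E1 E2
    proof -
      obtain F1 F2 where "finite F1" "F1 \<subseteq> K" "\<Omega> \<inter> \<Inter>F1 \<subseteq> E1"
        "finite F2" "F2 \<subseteq> K" "\<Omega> \<inter> \<Inter>F2 \<subseteq> E2"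
        using \<open>E1 \<in> \<F>\<close> \<open>E2 \<in> \<F>\<close> unfolding \<F>_def by blast
      then have "finite (F1 \<union> F2)" "F1 \<union> F2 \<subseteq> K" "\<Omega> \<inter> \<Inter>(F1 \<union> F2) \<subseteq> E1 \<inter> E2"
        by auto
      moreover have "E1 \<inter> E2 \<in> M"
        using \<open>E1 \<in> \<F>\<close> \<open>E2 \<in> \<F>\<close> by (simp add: \<F>_def Int)
      ultimately show ?thesis
        unfolding \<F>_def by blast
    qed
    show "E' \<in> \<F>" if "E \<in> \<F>" "E' \<in> M" "E \<subseteq> E'" for E E'
    proof -
      obtain F where "finite F" "F \<subseteq> K" "\<Omega> \<inter> \<Inter>F \<subseteq> E"
        using \<open>E \<in> \<F>\<close> unfolding \<F>_def by blast
      then show ?thesis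
        using that(2,3) unfolding \<F>_def by blast
    qed
  qed
  moreover have "K \<subseteq> \<F>"
  proof
    fix D assume "D \<in> K"
    then show "D \<in> \<F>"
      using K unfolding \<F>_def by (intro CollectI conjI exI[of _ "{D}"]) auto
  qed
  ultimately show ?thesis
    by (meson ex_stone_space_supset_filter subset_trans)
qed

lemma topspace_stone_topology: "topspace (stone_topology \<Omega> M) = stone_space \<Omega> M"
proof -
  have "p \<in> stone_basic \<Omega> M \<Omega>" if "p \<in> stone_space \<Omega> M" for p
    using that stone_spaceD(2)[OF that] by (simp add: stone_basic_def)
  then have "\<Union>(stone_basic \<Omega> M ` M) = stone_space \<Omega> M"
    using top by (auto simp: stone_basic_def)
  then show ?thesis
    by (simp add: stone_topology_def)
qed

lemma openin_stone_basic: "D \<in> M \<Longrightarrow> openin (stone_topology \<Omega> M) (stone_basic \<Omega> M D)"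
  unfolding stone_topology_def by (rule topology_generated_by_Basis) (rule imageI)

lemma stone_basic_Int:
  assumes "D \<in> M" "E \<in> M"
  shows "stone_basic \<Omega> M (D \<inter> E) = stone_basic \<Omega> M D \<inter> stone_basic \<Omega> M E"
proof -
  have "D \<inter> E \<in> p \<longleftrightarrow> D \<in> p \<and> E \<in> p" if "p \<in> stone_space \<Omega> M" for p
    using stone_spaceD(4,5)[OF that] assms by (meson Int_lower1 Int_lower2 Int)
  then show ?thesis
    by (auto simp: stone_basic_def)
qed

lemma openin_stone_topology_imp_basic:
  assumes "openin (stone_topology \<Omega> M) W" "p \<in> W"
  shows "\<exists>D\<in>M. p \<in> stone_basic \<Omega> M D \<and> stone_basic \<Omega> M D \<subseteq> W"
proof -
  note M_Int = Int  \<comment> \<open>shadowed by the name of the induction case below\<close>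
  have "generate_topology_on (stone_basic \<Omega> M ` M) W"
    using assms(1) by (simp add: stone_topology_def openin_topology_generated_by_iff)
  then have "\<forall>p\<in>W. \<exists>D\<in>M. p \<in> stone_basic \<Omega> M D \<and> stone_basic \<Omega> M D \<subseteq> W"
  proof (induct rule: generate_topology_on.induct)
    case (Int a b)
    show ?case
    proof
      fix p assume p: "p \<in> a \<inter> b"
      obtain D where "D \<in> M" "p \<in> stone_basic \<Omega> M D" "stone_basic \<Omega> M D \<subseteq> a"
        using Int.hyps(2) p by blast
      moreover obtain E where "E \<in> M" "p \<in> stone_basic \<Omega> M E" "stone_basic \<Omega> M E \<subseteq> b"
        using Int.hyps(4) p by blast
      ultimately show "\<exists>D\<in>M. p \<in> stone_basic \<Omega> M D \<and> stone_basic \<Omega> M D \<subseteq> a \<inter> b"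
        by (intro bexI[of _ "D \<inter> E"]) (auto simp: stone_basic_Int M_Int)
    qed
  next
    case (UN K)
    then show ?case by blast
  qed auto
  then show ?thesis
    using assms(2) by blast
qed

lemma compact_space_stone_topology: "compact_space (stone_topology \<Omega> M)"
  unfolding compact_space_def compactin_def topspace_stone_topology
proof (intro conjI allI impI subset_refl)
  fix \<U> assume \<U>: "(\<forall>U\<in>\<U>. openin (stone_topology \<Omega> M) U) \<and> stone_space \<Omega> M \<subseteq> \<Union>\<U>"
  let ?B = "{D \<in> M. \<exists>U\<in>\<U>. stone_basic \<Omega> M D \<subseteq> U}"
  have "\<exists>F. finite F \<and> F \<subseteq> ?B \<and> \<Omega> \<subseteq> \<Union>F"
  proof (rule ccontr)
    assume no_cover: "\<nexists>F. finite F \<and> F \<subseteq> ?B \<and> \<Omega> \<subseteq> \<Union>F"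
    have fip: "\<Omega> \<inter> \<Inter>F \<noteq> {}" if F: "finite F" "F \<subseteq> (\<lambda>D. \<Omega> - D) ` ?B" for F
    proof -
      obtain F' where F': "F' \<subseteq> ?B" "finite F'" "F = (\<lambda>D. \<Omega> - D) ` F'"
        using finite_subset_image[OF F] by blast
      then have "\<not> \<Omega> \<subseteq> \<Union>F'"
        using no_cover by blast
      then show ?thesis
        unfolding F'(3) by blast
    qed
    have "(\<lambda>D. \<Omega> - D) ` ?B \<subseteq> M"
      by (rule image_subsetI, rule compl_sets) simp
    from ex_stone_space_supset_fip[OF this fip]
    obtain p where p: "p \<in> stone_space \<Omega> M" "(\<lambda>D. \<Omega> - D) ` ?B \<subseteq> p" ..
    obtain U where "U \<in> \<U>" "p \<in> U"
      using \<U> p(1) by blast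
    then obtain D where D: "D \<in> M" "p \<in> stone_basic \<Omega> M D" "stone_basic \<Omega> M D \<subseteq> U"
      using openin_stone_topology_imp_basic[of U p] \<U> by blast
    then have "D \<in> ?B"
      using \<open>U \<in> \<U>\<close> by blast
    then have "\<Omega> - D \<in> p"
      using p(2) by blast
    moreover have "D \<in> p"
      using D(2) by (simp add: stone_basic_def)
    ultimately show False
      using stone_space_compl_iff[OF p(1) D(1)] by blast
  qed
  then obtain F where F: "finite F" "F \<subseteq> ?B" "\<Omega> \<subseteq> \<Union>F"
    by blast
  then have "\<forall>D\<in>F. \<exists>U. U \<in> \<U> \<and> stone_basic \<Omega> M D \<subseteq> U"
    by blast
  then obtain cover where cover: "\<forall>D\<in>F. cover D \<in> \<U> \<and> stone_basic \<Omega> M D \<subseteq> cover D"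
    by (rule bchoice[THEN exE])
  show "\<exists>\<F>. finite \<F> \<and> \<F> \<subseteq> \<U> \<and> stone_space \<Omega> M \<subseteq> \<Union>\<F>"
  proof (intro exI[of _ "cover ` F"] conjI)
    show "finite (cover ` F)"
      using F(1) by simp
    show "cover ` F \<subseteq> \<U>"
      using cover by blast
    have FM: "F \<subseteq> M"
      using F(2) by blast
    show "stone_space \<Omega> M \<subseteq> \<Union>(cover ` F)"
    proof
      fix p assume p: "p \<in> stone_space \<Omega> M"
      have "\<Union>F \<in> M"
        using F(1) FM by (rule finite_Union)
      then have "\<Union>F \<in> p"
        using stone_spaceD(5)[OF p stone_spaceD(2)[OF p]] F(3) by blast
      then obtain D where "D \<in> F" "D \<in> p"
        using stone_space_finite_Union[OF p F(1) FM] by blast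
      then show "p \<in> \<Union>(cover ` F)"
        using cover p by (auto simp: stone_basic_def)
    qed
  qed
qed

lemma Hausdorff_space_stone_topology: "Hausdorff_space (stone_topology \<Omega> M)"
  unfolding Hausdorff_space_def topspace_stone_topology
proof (intro allI impI)
  fix p q assume pq: "p \<in> stone_space \<Omega> M \<and> q \<in> stone_space \<Omega> M \<and> p \<noteq> q"
  then have "\<not> p \<subseteq> q"
    using stone_space_eqI by blast
  then obtain D where D: "D \<in> p" "D \<notin> q"
    by blast
  then have "D \<in> M" "\<Omega> - D \<in> q"
    using pq stone_spaceD(1) stone_space_compl_iff by blast+
  moreover have "disjnt (stone_basic \<Omega> M D) (stone_basic \<Omega> M (\<Omega> - D))"
    using stone_space_compl_iff \<open>D \<in> M\<close> by (auto simp: stone_basic_def disjnt_def)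
  ultimately show "\<exists>U V. openin (stone_topology \<Omega> M) U \<and> openin (stone_topology \<Omega> M) V
      \<and> p \<in> U \<and> q \<in> V \<and> disjnt U V"
    using pq D(1)
    by (intro exI[of _ "stone_basic \<Omega> M D"] exI[of _ "stone_basic \<Omega> M (\<Omega> - D)"]
        conjI openin_stone_basic compl_sets) (auto simp: stone_basic_def)
qed

lemma stone_closedin_separation:
  assumes C1: "closedin (stone_topology \<Omega> M) C1" and C2: "closedin (stone_topology \<Omega> M) C2"
    and disj: "C1 \<inter> C2 = {}"
  shows "\<exists>E\<in>M. C1 \<subseteq> stone_basic \<Omega> M E \<and> stone_basic \<Omega> M E \<inter> C2 = {}"
proof -
  let ?B = "{D \<in> M. stone_basic \<Omega> M D \<inter> C2 = {}}"
  have "C1 \<subseteq> \<Union>(stone_basic \<Omega> M ` ?B)"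
  proof
    fix p assume p: "p \<in> C1"
    have "openin (stone_topology \<Omega> M) (topspace (stone_topology \<Omega> M) - C2)"
      by (rule openin_diff[OF openin_topspace C2])
    moreover have "p \<in> topspace (stone_topology \<Omega> M) - C2"
      using p disj closedin_subset[OF C1] by blast
    ultimately obtain D where "D \<in> M" "p \<in> stone_basic \<Omega> M D"
      "stone_basic \<Omega> M D \<subseteq> topspace (stone_topology \<Omega> M) - C2"
      by (metis openin_stone_topology_imp_basic)
    then show "p \<in> \<Union>(stone_basic \<Omega> M ` ?B)"
      by blast
  qed
  moreover have "\<forall>U\<in>stone_basic \<Omega> M ` ?B. openin (stone_topology \<Omega> M) U"
    using openin_stone_basic by blast
  moreover have "compactin (stone_topology \<Omega> M) C1"
    by (rule closedin_compact_space[OF compact_space_stone_topology C1])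
  ultimately obtain \<F> where \<F>: "finite \<F>" "\<F> \<subseteq> stone_basic \<Omega> M ` ?B" "C1 \<subseteq> \<Union>\<F>"
    unfolding compactin_def by (meson Union_mono)
  obtain F where F: "F \<subseteq> ?B" "finite F" "\<F> = stone_basic \<Omega> M ` F"
    using finite_subset_image[OF \<F>(1,2)] by blast
  have FM: "F \<subseteq> M"
    using F(1) by blast
  have E: "\<Union>F \<in> M"
    using F(2) FM by (rule finite_Union)
  show ?thesis
  proof (intro bexI[OF _ E] conjI)
    show "C1 \<subseteq> stone_basic \<Omega> M (\<Union>F)"
    proof
      fix p assume "p \<in> C1"
      then obtain D where "D \<in> F" "p \<in> stone_basic \<Omega> M D"
        using \<F>(3) F(3) by blast
      then show "p \<in> stone_basic \<Omega> M (\<Union>F)"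
        using stone_spaceD(5)[of p D "\<Union>F"] E by (auto simp: stone_basic_def)
    qed
    show "stone_basic \<Omega> M (\<Union>F) \<inter> C2 = {}"
    proof (rule ccontr)
      assume "stone_basic \<Omega> M (\<Union>F) \<inter> C2 \<noteq> {}"
      then obtain q where q: "q \<in> stone_space \<Omega> M" "\<Union>F \<in> q" "q \<in> C2"
        by (auto simp: stone_basic_def)
      then obtain D where "D \<in> F" "D \<in> q"
        using stone_space_finite_Union[OF q(1) F(2) FM] by blast
      then show False
        using q F(1) by (auto simp: stone_basic_def)
    qed
  qed
qed

end

section \<open>The type space of a definable group\<close>

lemma map_nth_append_upt: "map ((!) (xs @ ys @ zs)) [length xs..<length xs + length ys] = ys"
  by (rule nth_equalityI) (auto simp: nth_append)

locale def_group =
  fixes FI :: "'f \<Rightarrow> 'm list \<Rightarrow> 'm" and RI :: "'r \<Rightarrow> 'm list \<Rightarrow> bool"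
    and k :: nat and Gr :: "('m list, 'z) monoid_scheme"
  assumes definable_group: "definable_group FI RI k Gr"
begin

abbreviation "G \<equiv> carrier Gr"
abbreviation "Def \<equiv> def_subsets FI RI k G"
abbreviation "SGM \<equiv> stone_space G Def"
abbreviation "SGtop \<equiv> stone_topology G Def"

sublocale group Gr
  using definable_group by (simp add: definable_group_def)

lemma definable_carrier: "definable_set FI RI k G"
  using definable_group by (simp add: definable_group_def)

lemma carrier_length: "x \<in> G \<Longrightarrow> length x = k"
  using definable_set_length[OF definable_carrier] .

sublocale Def: algebra G Def
  unfolding algebra_iff_Int
proof (intro conjI ballI)
  show "Def \<subseteq> Pow G"
    by (auto simp: def_subsets_def)
  show compl: "G - D \<in> Def" if "D \<in> Def" for D
  proof -
    have "G - D = G \<inter> ({a. length a = k} - D)"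
      using carrier_length by auto
    then show ?thesis
      using that definable_carrier
      by (auto simp: def_subsets_def intro!: definable_set_Int definable_set_compl)
  qed
  show "D \<inter> E \<in> Def" if "D \<in> Def" "E \<in> Def" for D E
    using that by (auto simp: def_subsets_def intro: definable_set_Int)
  have "G \<in> Def"
    using definable_carrier by (simp add: def_subsets_def)
  then show "{} \<in> Def"
    using compl[of G] by simp
qed

lemma SG_eq: "SG FI RI k G = SGM"
  by (simp add: SG_def stone_space_def set_filter_def)

lemma SG_top_eq: "SG_top FI RI k G = SGtop"
  by (simp add: SG_top_def stone_topology_def stone_basic_def SG_eq)

lemma product_graph_mem:
  assumes "length g = k" "length x = k"
  shows "g @ x @ y \<in> {a @ b @ c | a b c. a \<in> G \<and> b \<in> G \<and> c = a \<otimes>\<^bsub>Gr\<^esub> b}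
     \<longleftrightarrow> g \<in> G \<and> x \<in> G \<and> y = g \<otimes>\<^bsub>Gr\<^esub> x"
proof
  assume "g @ x @ y \<in> {a @ b @ c | a b c. a \<in> G \<and> b \<in> G \<and> c = a \<otimes>\<^bsub>Gr\<^esub> b}"
  then obtain a b c where eq: "g @ x @ y = a @ b @ c"
    and abc: "a \<in> G" "b \<in> G" "c = a \<otimes>\<^bsub>Gr\<^esub> b"
    by blast
  have "g = a \<and> x @ y = b @ c"
    using eq carrier_length[OF abc(1)] assms by (simp add: append_eq_append_conv)
  moreover from this have "x = b \<and> y = c"
    using carrier_length[OF abc(2)] assms by (simp add: append_eq_append_conv)
  ultimately show "g \<in> G \<and> x \<in> G \<and> y = g \<otimes>\<^bsub>Gr\<^esub> x"
    using abc by simp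
qed auto

definition translation_graph :: "'m list set \<Rightarrow> 'm list set" where
  "translation_graph D = {x @ g | x g. x \<in> G \<and> g \<in> G \<and> g \<otimes>\<^bsub>Gr\<^esub> x \<in> D}"

text \<open>The translation graph is cut out by the graph of the multiplication, with the
  coordinates permuted and the product projected away.\<close>

lemma definable_translation_graph:
  assumes D: "definable_set FI RI k D"
  shows "definable_set FI RI (k + k) (translation_graph D)"
proof -
  let ?Mul = "{a @ b @ c | a b c. a \<in> G \<and> b \<in> G \<and> c = a \<otimes>\<^bsub>Gr\<^esub> b}"
  let ?js = "[k..<k + k] @ [0..<k] @ [k + k..<k + k + k]"
  let ?W = "{w. length w = k + k + k \<and> map ((!) w) ?js \<in> ?Mul}
    \<inter> {w. length w = k + k + k \<and> map ((!) w) [k + k..<k + k + k] \<in> D}"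
  have "definable_set FI RI (3 * k) ?Mul"
    using definable_group by (simp add: definable_group_def)
  moreover have "3 * k = k + k + k"
    by simp
  ultimately have "definable_set FI RI (k + k + k) ?Mul"
    by metis
  then have "definable_set FI RI (k + k + k) ?W"
    using D by (intro definable_set_Int definable_set_coordinates) (auto simp: add.assoc)
  then have "definable_set FI RI (k + k) {a. length a = k + k \<and> (\<exists>y. length y = k \<and> a @ y \<in> ?W)}"
    by (rule definable_set_project)
  moreover have "{a. length a = k + k \<and> (\<exists>y. length y = k \<and> a @ y \<in> ?W)}
      = {x @ g | x g. x \<in> G \<and> g \<in> G \<and> g \<otimes>\<^bsub>Gr\<^esub> x \<in> D}"
  proof -
    have coords: "map ((!) (x @ g @ y)) ?js = g @ x @ y"
      "map ((!) (x @ g @ y)) [k + k..<k + k + k] = y"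
      if "length x = k" "length g = k" "length y = k" for x g y :: "'m list"
      using that map_nth_append_upt[of x g y] map_nth_append_upt[of "[]" x "g @ y"]
        map_nth_append_upt[of "x @ g" y "[]"] by simp_all
    show ?thesis
    proof (intro equalityI subsetI)
      fix a assume "a \<in> {a. length a = k + k \<and> (\<exists>y. length y = k \<and> a @ y \<in> ?W)}"
      then obtain y where a: "length a = k + k" and y: "length y = k" "a @ y \<in> ?W"
        by blast
      define x g where "x = take k a" and "g = drop k a"
      have lengths: "length x = k" "length g = k" and "a = x @ g"
        using a by (simp_all add: x_def g_def)
      then have "g @ x @ y \<in> ?Mul" "y \<in> D"
        using y coords[OF lengths y(1)] by auto
      then have "x \<in> G" "g \<in> G" "g \<otimes>\<^bsub>Gr\<^esub> x \<in> D"
        using product_graph_mem[OF lengths(2,1)] by simp_all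
      then show "a \<in> {x @ g | x g. x \<in> G \<and> g \<in> G \<and> g \<otimes>\<^bsub>Gr\<^esub> x \<in> D}"
        unfolding \<open>a = x @ g\<close> by (intro CollectI exI[of _ x] exI[of _ g]) simp
    next
      fix a assume "a \<in> {x @ g | x g. x \<in> G \<and> g \<in> G \<and> g \<otimes>\<^bsub>Gr\<^esub> x \<in> D}"
      then obtain x g where xg: "a = x @ g" "x \<in> G" "g \<in> G" "g \<otimes>\<^bsub>Gr\<^esub> x \<in> D"
        by blast
      have lengths: "length x = k" "length g = k" "length (g \<otimes>\<^bsub>Gr\<^esub> x) = k"
        using xg carrier_length by simp_all
      have "g @ x @ (g \<otimes>\<^bsub>Gr\<^esub> x) \<in> ?Mul"
        using product_graph_mem[OF lengths(2,1)] xg(2,3) by simp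
      then have "a @ (g \<otimes>\<^bsub>Gr\<^esub> x) \<in> ?W"
        using xg(1,4) coords[OF lengths] lengths by simp
      then show "a \<in> {a. length a = k + k \<and> (\<exists>y. length y = k \<and> a @ y \<in> ?W)}"
        using xg(1) lengths by (intro CollectI conjI exI[of _ "g \<otimes>\<^bsub>Gr\<^esub> x"]) simp_all
    qed
  qed
  ultimately show ?thesis
    by (simp add: translation_graph_def)
qed

lemma translation_graph_append_iff:
  assumes "g \<in> G" "length x = k"
  shows "x @ g \<in> translation_graph D \<longleftrightarrow> x \<in> G \<and> g \<otimes>\<^bsub>Gr\<^esub> x \<in> D"
  unfolding translation_graph_def
proof
  assume "x @ g \<in> {x @ g | x g. x \<in> G \<and> g \<in> G \<and> g \<otimes>\<^bsub>Gr\<^esub> x \<in> D}"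
  then obtain x' g' where "x @ g = x' @ g'" "x' \<in> G" "g' \<in> G" "g' \<otimes>\<^bsub>Gr\<^esub> x' \<in> D"
    by blast
  moreover from this have "x = x' \<and> g = g'"
    using assms carrier_length by (simp add: append_eq_append_conv)
  ultimately show "x \<in> G \<and> g \<otimes>\<^bsub>Gr\<^esub> x \<in> D"
    by simp
next
  assume "x \<in> G \<and> g \<otimes>\<^bsub>Gr\<^esub> x \<in> D"
  then show "x @ g \<in> {x @ g | x g. x \<in> G \<and> g \<in> G \<and> g \<otimes>\<^bsub>Gr\<^esub> x \<in> D}"
    using assms(1) by (intro CollectI exI[of _ x] exI[of _ g]) simp
qed

lemma translate_preimage_in_Def:
  assumes g: "g \<in> G" and D: "D \<in> Def"
  shows "{x \<in> G. g \<otimes>\<^bsub>Gr\<^esub> x \<in> D} \<in> Def"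
proof -
  have "definable_set FI RI k D"
    using D by (simp add: def_subsets_def)
  then have "definable_set FI RI k {x. length x = k \<and> x @ g \<in> translation_graph D}"
    by (rule definable_set_fix_suffix[OF definable_translation_graph]) (rule carrier_length[OF g])
  moreover have "{x. length x = k \<and> x @ g \<in> translation_graph D} = {x \<in> G. g \<otimes>\<^bsub>Gr\<^esub> x \<in> D}"
    using translation_graph_append_iff[OF g] carrier_length by auto
  ultimately show ?thesis
    by (simp add: def_subsets_def)
qed

abbreviation "act \<equiv> type_act FI RI k Gr"
abbreviation "tpG \<equiv> tp FI RI k G"

lemma mem_type_act_iff: "D \<in> act g p \<longleftrightarrow> D \<in> Def \<and> {x \<in> G. g \<otimes>\<^bsub>Gr\<^esub> x \<in> D} \<in> p"
  by (simp add: type_act_def)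

lemma tp_in_SGM: "g \<in> G \<Longrightarrow> tpG g \<in> SGM"
  unfolding stone_space_def set_filter_def tp_def
  using Def.top Def.empty_sets Def.Int Def.compl_sets by auto

lemma type_act_in_SGM:
  assumes g: "g \<in> G" and p: "p \<in> SGM"
  shows "act g p \<in> SGM"
proof -
  let ?T = "\<lambda>D. {x \<in> G. g \<otimes>\<^bsub>Gr\<^esub> x \<in> D}"
  have T: "?T G = G" "?T {} = {}" "?T (D \<inter> E) = ?T D \<inter> ?T E" "?T (G - D) = G - ?T D" for D E
    using g by auto
  show ?thesis
    unfolding stone_space_def set_filter_def
  proof (intro CollectI conjI ballI impI)
    show "act g p \<subseteq> Def"
      by (auto simp: type_act_def)
    show "G \<in> act g p" "{} \<notin> act g p"
      using T(1,2) Def.top Def.stone_spaceD(2,3)[OF p] by (simp_all add: mem_type_act_iff)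
    show "D \<inter> E \<in> act g p" if "D \<in> act g p" "E \<in> act g p" for D E
      using that T(3) Def.Int Def.stone_spaceD(4)[OF p] by (simp add: mem_type_act_iff)
    show "E \<in> act g p" if "D \<in> act g p" "E \<in> Def" "D \<subseteq> E" for D E
    proof -
      have "?T D \<in> p" "?T D \<subseteq> ?T E"
        using that(1,3) by (auto simp: mem_type_act_iff)
      then have "?T E \<in> p"
        using Def.stone_spaceD(5)[OF p _ translate_preimage_in_Def[OF g that(2)]] by blast
      then show ?thesis
        using that(2) by (simp add: mem_type_act_iff)
    qed
    show "D \<in> act g p \<or> G - D \<in> act g p" if "D \<in> Def" for D
      using that T(4) Def.stone_spaceD(6)[OF p] translate_preimage_in_Def[OF g] Def.compl_sets
      by (simp add: mem_type_act_iff)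
  qed
qed

lemma type_act_one:
  assumes "p \<in> SGM"
  shows "act \<one>\<^bsub>Gr\<^esub> p = p"
proof -
  have "{x \<in> G. \<one>\<^bsub>Gr\<^esub> \<otimes>\<^bsub>Gr\<^esub> x \<in> D} = D" if "D \<in> Def" for D
    using Def.sets_into_space[OF that] by auto
  then show ?thesis
    using Def.stone_spaceD(1)[OF assms] by (auto simp: type_act_def)
qed

lemma type_act_mult:
  assumes "g \<in> G" "h \<in> G"
  shows "act (g \<otimes>\<^bsub>Gr\<^esub> h) p = act g (act h p)"
proof -
  have "{x \<in> G. (g \<otimes>\<^bsub>Gr\<^esub> h) \<otimes>\<^bsub>Gr\<^esub> x \<in> D}
      = {y \<in> G. h \<otimes>\<^bsub>Gr\<^esub> y \<in> {x \<in> G. g \<otimes>\<^bsub>Gr\<^esub> x \<in> D}}" for D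
    using assms by (auto simp: m_assoc)
  then show ?thesis
    using translate_preimage_in_Def[OF assms(1)] by (auto simp: type_act_def)
qed

lemma type_act_tp_one:
  assumes "g \<in> G"
  shows "act g (tpG \<one>\<^bsub>Gr\<^esub>) = tpG g"
  using assms translate_preimage_in_Def[OF assms] by (auto simp: type_act_def tp_def)

lemma continuous_map_type_act:
  assumes g: "g \<in> G"
  shows "continuous_map SGtop SGtop (act g)"
proof -
  have "continuous_map SGtop (topology_generated_by (stone_basic G Def ` Def)) (act g)"
  proof (rule continuous_on_generated_topo)
    fix U assume "U \<in> stone_basic G Def ` Def"
    then obtain D where D: "D \<in> Def" "U = stone_basic G Def D"
      by blast
    then have "act g -` U \<inter> topspace SGtop = stone_basic G Def {x \<in> G. g \<otimes>\<^bsub>Gr\<^esub> x \<in> D}"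
      using type_act_in_SGM[OF g]
      by (auto simp: Def.topspace_stone_topology stone_basic_def mem_type_act_iff)
    then show "openin SGtop (act g -` U \<inter> topspace SGtop)"
      using Def.openin_stone_basic[OF translate_preimage_in_Def[OF g D(1)]] by simp
  next
    have "\<Union>(stone_basic G Def ` Def) = SGM"
      using Def.topspace_stone_topology by (simp add: stone_topology_def)
    then show "act g ` topspace SGtop \<subseteq> \<Union>(stone_basic G Def ` Def)"
      using type_act_in_SGM[OF g] by (auto simp: Def.topspace_stone_topology)
  qed
  then show ?thesis
    by (simp add: stone_topology_def)
qed

lemma homeomorphic_map_type_act:
  assumes g: "g \<in> G"
  shows "homeomorphic_map SGtop SGtop (act g)"
proof -
  have "act (inv\<^bsub>Gr\<^esub> g) (act g p) = p" "act g (act (inv\<^bsub>Gr\<^esub> g) p) = p" if "p \<in> SGM" for p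
    using type_act_mult[of "inv\<^bsub>Gr\<^esub> g" g p] type_act_mult[of g "inv\<^bsub>Gr\<^esub> g" p]
      type_act_one[OF that] g by simp_all
  then have "homeomorphic_maps SGtop SGtop (act g) (act (inv\<^bsub>Gr\<^esub> g))"
    unfolding homeomorphic_maps_def Def.topspace_stone_topology
    using continuous_map_type_act g by simp
  then show ?thesis
    using homeomorphic_map_maps by blast
qed

lemma closure_of_realized_types: "SGtop closure_of (tpG ` G) = SGM"
proof
  show "SGtop closure_of (tpG ` G) \<subseteq> SGM"
    using closure_of_subset_topspace Def.topspace_stone_topology by metis
  show "SGM \<subseteq> SGtop closure_of (tpG ` G)"
  proof
    fix p assume p: "p \<in> SGM"
    show "p \<in> SGtop closure_of (tpG ` G)"
      unfolding in_closure_of Def.topspace_stone_topology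
    proof (intro conjI allI impI)
      show "p \<in> SGM"
        by (fact p)
      fix T assume T: "p \<in> T \<and> openin SGtop T"
      then obtain D where D: "D \<in> Def" "p \<in> stone_basic G Def D" "stone_basic G Def D \<subseteq> T"
        using Def.openin_stone_topology_imp_basic by blast
      then have "D \<noteq> {}"
        using Def.stone_spaceD(3)[OF p] by (auto simp: stone_basic_def)
      then obtain g where "g \<in> D"
        by blast
      moreover have "g \<in> G"
        using \<open>g \<in> D\<close> Def.sets_into_space[OF D(1)] by blast
      ultimately have "tpG g \<in> stone_basic G Def D"
        using tp_in_SGM D(1) by (simp add: stone_basic_def tp_def)
      then show "\<exists>y. y \<in> tpG ` G \<and> y \<in> T"
        using \<open>g \<in> G\<close> D(3) by blast
    qed
  qed
qed

lemma definable_map_type_orbit: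
  assumes p: "p \<in> SGM" and p_def: "type_definable FI RI k G p"
  shows "definable_map FI RI k G SGtop (\<lambda>g. act g p)"
  unfolding definable_map_def
proof (intro allI impI)
  fix C1 C2 assume C: "closedin SGtop C1 \<and> closedin SGtop C2 \<and> C1 \<inter> C2 = {}"
  obtain E where E: "E \<in> Def" "C1 \<subseteq> stone_basic G Def E" "stone_basic G Def E \<inter> C2 = {}"
    using Def.stone_closedin_separation[of C1 C2] C by blast
  define Y where "Y = {g \<in> G. {x \<in> G. g \<otimes>\<^bsub>Gr\<^esub> x \<in> E} \<in> p}"
  let ?T = "translation_graph E"
  have "definable_set FI RI k E"
    using E(1) by (simp add: def_subsets_def)
  then have T: "definable_set FI RI (k + k) ?T"
    by (rule definable_translation_graph)
  have "definable_set FI RI k {g. length g = k \<and> {x \<in> G. x @ g \<in> ?T} \<in> p}"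
    by (rule type_definable_fiber[OF p_def _ T]) (rule carrier_length)
  then have "definable_set FI RI k (G \<inter> {g. length g = k \<and> {x \<in> G. x @ g \<in> ?T} \<in> p})"
    by (rule definable_set_Int[OF definable_carrier])
  moreover have "G \<inter> {g. length g = k \<and> {x \<in> G. x @ g \<in> ?T} \<in> p} = Y"
  proof -
    have fiber: "{x \<in> G. x @ g \<in> ?T} = {x \<in> G. g \<otimes>\<^bsub>Gr\<^esub> x \<in> E}" if g: "g \<in> G" for g
      using translation_graph_append_iff[OF g, of _ E] carrier_length by auto
    show ?thesis
      unfolding Y_def by (auto simp: fiber carrier_length)
  qed
  ultimately have "definable_set FI RI k Y"
    by (simp only:)
  moreover have "{g \<in> G. act g p \<in> C1} \<subseteq> Y"
    using E(2) by (auto simp: Y_def stone_basic_def mem_type_act_iff)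
  moreover have "Y \<inter> {g \<in> G. act g p \<in> C2} = {}"
  proof -
    have "act g p \<in> stone_basic G Def E" if "g \<in> Y" for g
      using that E(1) type_act_in_SGM[OF _ p] by (simp add: Y_def stone_basic_def mem_type_act_iff)
    then show ?thesis
      using E(3) by blast
  qed
  moreover have "Y \<subseteq> G"
    by (simp add: Y_def)
  ultimately show "\<exists>Y. Y \<subseteq> G \<and> definable_set FI RI k Y \<and> {g \<in> G. act g p \<in> C1} \<subseteq> Y
      \<and> Y \<inter> {g \<in> G. act g p \<in> C2} = {}"
    by blast
qed

lemma definable_ambit_types:
  assumes "\<forall>p\<in>SGM. type_definable FI RI k G p"
  shows "definable_ambit FI RI k Gr SGtop act (tpG \<one>\<^bsub>Gr\<^esub>)"
proof -
  have "(\<lambda>g. act g (tpG \<one>\<^bsub>Gr\<^esub>)) ` G = tpG ` G"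
    using type_act_tp_one by simp
  then show ?thesis
    unfolding definable_ambit_def definable_flow_def Def.topspace_stone_topology
    using Def.compact_space_stone_topology Def.Hausdorff_space_stone_topology
      homeomorphic_map_type_act type_act_one type_act_mult definable_map_type_orbit assms
      tp_in_SGM closure_of_realized_types
    by simp
qed

end

section \<open>The universal property\<close>

locale def_ambit = def_group FI RI k Gr
  for FI :: "'f \<Rightarrow> 'm list \<Rightarrow> 'm" and RI :: "'r \<Rightarrow> 'm list \<Rightarrow> bool"
    and k :: nat and Gr :: "('m list, 'z) monoid_scheme" +
  fixes X :: "'x topology" and \<alpha> :: "'m list \<Rightarrow> 'x \<Rightarrow> 'x" and x0 :: 'x
  assumes ambit: "definable_ambit FI RI k Gr X \<alpha> x0"
begin

definition orbit :: "'m list \<Rightarrow> 'x" where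
  "orbit g = \<alpha> g x0"

definition type_limit :: "'m list set set \<Rightarrow> 'x \<Rightarrow> bool" where
  "type_limit p x \<longleftrightarrow> x \<in> topspace X \<and> (\<forall>D\<in>p. x \<in> X closure_of (orbit ` D))"

definition univ_map :: "'m list set set \<Rightarrow> 'x" where
  "univ_map p = (THE x. type_limit p x)"

lemma x0_in_topspace: "x0 \<in> topspace X"
  and closure_of_orbit: "X closure_of (orbit ` G) = topspace X"
  and compact_space_X: "compact_space X"
  and Hausdorff_space_X: "Hausdorff_space X"
  and homeomorphic_map_\<alpha>: "g \<in> G \<Longrightarrow> homeomorphic_map X X (\<alpha> g)"
  and \<alpha>_mult: "g \<in> G \<Longrightarrow> h \<in> G \<Longrightarrow> x \<in> topspace X \<Longrightarrow> \<alpha> (g \<otimes>\<^bsub>Gr\<^esub> h) x = \<alpha> g (\<alpha> h x)"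
  and \<alpha>_one: "x \<in> topspace X \<Longrightarrow> \<alpha> \<one>\<^bsub>Gr\<^esub> x = x"
  and definable_map_orbit: "definable_map FI RI k G X orbit"
  using ambit unfolding definable_ambit_def definable_flow_def orbit_def[abs_def] by simp_all

lemma orbit_in_topspace: "g \<in> G \<Longrightarrow> orbit g \<in> topspace X"
  using homeomorphic_imp_surjective_map[OF homeomorphic_map_\<alpha>] x0_in_topspace
  unfolding orbit_def by blast

lemma orbit_mult: "g \<in> G \<Longrightarrow> h \<in> G \<Longrightarrow> orbit (g \<otimes>\<^bsub>Gr\<^esub> h) = \<alpha> g (orbit h)"
  using \<alpha>_mult x0_in_topspace by (simp add: orbit_def)

lemma orbit_separation:
  assumes "closedin X C1" "closedin X C2" "C1 \<inter> C2 = {}"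
  shows "\<exists>Y\<in>Def. {g \<in> G. orbit g \<in> C1} \<subseteq> Y \<and> Y \<inter> {g \<in> G. orbit g \<in> C2} = {}"
proof -
  have "closedin X C1 \<and> closedin X C2 \<and> C1 \<inter> C2 = {}"
    using assms by simp
  from definable_map_orbit[unfolded definable_map_def, rule_format, OF this]
  obtain Y where "Y \<subseteq> G" "definable_set FI RI k Y" "{g \<in> G. orbit g \<in> C1} \<subseteq> Y"
    "Y \<inter> {g \<in> G. orbit g \<in> C2} = {}"
    by blast
  then show ?thesis
    by (intro bexI[of _ Y]) (simp_all add: def_subsets_def)
qed

text \<open>Compactness of X: the closures of the orbits of the members of p have the finite
  intersection property.\<close>

lemma type_limit_exists:
  assumes p: "p \<in> SGM"
  shows "\<exists>x. type_limit p x"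
proof -
  let ?C = "(\<lambda>D. X closure_of (orbit ` D)) ` p"
  have "\<Inter>\<F> \<noteq> {}" if \<F>: "finite \<F>" "\<F> \<subseteq> ?C" for \<F>
  proof -
    obtain F where F: "F \<subseteq> p" "finite F" "\<F> = (\<lambda>D. X closure_of (orbit ` D)) ` F"
      using finite_subset_image[OF \<F>] by blast
    have "G \<inter> \<Inter>F \<in> p"
      using Def.stone_space_finite_Inter[OF p F(2,1)] .
    then have "G \<inter> \<Inter>F \<noteq> {}"
      using Def.stone_spaceD(3)[OF p] by auto
    then obtain g where g: "g \<in> G" "\<And>D. D \<in> F \<Longrightarrow> g \<in> D"
      by blast
    have "orbit g \<in> X closure_of (orbit ` D)" if "D \<in> F" for D
    proof -
      have "orbit ` D \<subseteq> topspace X"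
        using that F(1) Def.sets_into_space Def.stone_spaceD(1)[OF p] orbit_in_topspace by blast
      then show ?thesis
        using closure_of_subset g(2)[OF that] by blast
    qed
    then show ?thesis
      unfolding F(3) by blast
  qed
  moreover have "\<forall>C\<in>?C. closedin X C"
    by simp
  ultimately have "\<Inter>?C \<noteq> {}"
    using compact_space_X[unfolded compact_space_fip, rule_format, of ?C] by blast
  then obtain x where x: "x \<in> \<Inter>?C"
    by blast
  then have "x \<in> X closure_of (orbit ` G)"
    using Def.stone_spaceD(2)[OF p] by blast
  then have "x \<in> topspace X"
    by (rule subsetD[OF closure_of_subset_topspace])
  with x show ?thesis
    unfolding type_limit_def by blast
qed

text \<open>This is where the definability of the orbit map is used, together with the regularity
  of X.\<close>

lemma type_limit_nhd:
  assumes p: "p \<in> SGM" and x: "type_limit p x" and U: "openin X U" "x \<in> U"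
  shows "\<exists>D\<in>p. orbit ` D \<subseteq> U"
proof -
  have "regular_space X"
    using compact_Hausdorff_imp_regular_space compact_space_X Hausdorff_space_X by blast
  then obtain V C where V: "openin X V" "x \<in> V" and C: "closedin X C" "V \<subseteq> C" "C \<subseteq> U"
    using U unfolding neighbourhood_base_of_closedin[symmetric] neighbourhood_base_of by metis
  have "closedin X (topspace X - U)" "(topspace X - U) \<inter> C = {}"
    using U(1) C(3) by auto
  from orbit_separation[OF this(1) C(1) this(2)]
  obtain Y where Y: "Y \<in> Def" "{g \<in> G. orbit g \<in> topspace X - U} \<subseteq> Y"
    "Y \<inter> {g \<in> G. orbit g \<in> C} = {}"
    by blast
  have "Y \<notin> p"
  proof
    assume "Y \<in> p"
    then have "x \<in> X closure_of (orbit ` Y)"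
      using x by (simp add: type_limit_def)
    moreover have "V \<inter> orbit ` Y = {}"
      using Y(3) C(2) Def.sets_into_space[OF Y(1)] by blast
    ultimately show False
      using openin_Int_closure_of_eq_empty[OF V(1)] V(2) by blast
  qed
  then have "G - Y \<in> p"
    using Def.stone_space_compl_iff[OF p Y(1)] by blast
  moreover have "orbit ` (G - Y) \<subseteq> U"
    using Y(2) orbit_in_topspace by blast
  ultimately show ?thesis
    by blast
qed

lemma type_limit_unique:
  assumes p: "p \<in> SGM" and "type_limit p x" "type_limit p y"
  shows "x = y"
proof (rule ccontr)
  assume "x \<noteq> y"
  moreover have "x \<in> topspace X" "y \<in> topspace X"
    using assms(2,3) by (simp_all add: type_limit_def)
  ultimately obtain U V where UV: "openin X U" "openin X V" "x \<in> U" "y \<in> V" "disjnt U V"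
    using Hausdorff_space_X[unfolded Hausdorff_space_def, rule_format, of x y] by blast
  then obtain D where "D \<in> p" "orbit ` D \<subseteq> U"
    using type_limit_nhd[OF p assms(2)] by blast
  then have "V \<inter> orbit ` D = {}"
    using UV(5) by (auto simp: disjnt_def)
  then have "y \<notin> X closure_of (orbit ` D)"
    using openin_Int_closure_of_eq_empty[OF UV(2)] UV(4) by blast
  then show False
    using assms(3) \<open>D \<in> p\<close> by (simp add: type_limit_def)
qed

lemma type_limit_univ_map: "p \<in> SGM \<Longrightarrow> type_limit p (univ_map p)"
  unfolding univ_map_def using type_limit_exists type_limit_unique by (metis theI)

lemma univ_map_eqI: "p \<in> SGM \<Longrightarrow> type_limit p x \<Longrightarrow> univ_map p = x"
  using type_limit_univ_map type_limit_unique by blast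

lemma univ_map_in_topspace: "p \<in> SGM \<Longrightarrow> univ_map p \<in> topspace X"
  using type_limit_univ_map by (simp add: type_limit_def)

lemma univ_map_tp:
  assumes g: "g \<in> G"
  shows "univ_map (tpG g) = orbit g"
proof (rule univ_map_eqI[OF tp_in_SGM[OF g]])
  have "orbit g \<in> X closure_of (orbit ` D)" if "D \<in> tpG g" for D
  proof -
    have "D \<subseteq> G" "g \<in> D"
      using that by (simp_all add: tp_def def_subsets_def)
    then show ?thesis
      using closure_of_subset[of "orbit ` D" X] orbit_in_topspace by blast
  qed
  then show "type_limit (tpG g) (orbit g)"
    using orbit_in_topspace[OF g] by (simp add: type_limit_def)
qed

lemma univ_map_tp_one: "univ_map (tpG \<one>\<^bsub>Gr\<^esub>) = x0"
  using univ_map_tp[OF one_closed] \<alpha>_one[OF x0_in_topspace] by (simp add: orbit_def)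

lemma continuous_map_univ_map: "continuous_map SGtop X univ_map"
  unfolding continuous_map_def Def.topspace_stone_topology
proof (intro conjI allI impI)
  show "univ_map \<in> SGM \<rightarrow> topspace X"
    using univ_map_in_topspace by blast
  fix W assume W: "openin X W"
  show "openin SGtop {p \<in> SGM. univ_map p \<in> W}"
  proof (subst openin_subopen, intro ballI)
    fix p assume "p \<in> {p \<in> SGM. univ_map p \<in> W}"
    then have p: "p \<in> SGM" and pW: "univ_map p \<in> W"
      by auto
    have "regular_space X"
      using compact_Hausdorff_imp_regular_space compact_space_X Hausdorff_space_X by blast
    then obtain U C where U: "openin X U" "univ_map p \<in> U" and C: "closedin X C" "U \<subseteq> C" "C \<subseteq> W"
      using W pW unfolding neighbourhood_base_of_closedin[symmetric] neighbourhood_base_of by metis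
    obtain D where D: "D \<in> p" "orbit ` D \<subseteq> U"
      using type_limit_nhd[OF p type_limit_univ_map[OF p] U] by blast
    have "stone_basic G Def D \<subseteq> {p \<in> SGM. univ_map p \<in> W}"
    proof
      fix q assume "q \<in> stone_basic G Def D"
      then have q: "q \<in> SGM" "D \<in> q"
        by (auto simp: stone_basic_def)
      then have "univ_map q \<in> X closure_of (orbit ` D)"
        using type_limit_univ_map[OF q(1)] by (simp add: type_limit_def)
      also have "\<dots> \<subseteq> C"
        using closure_of_minimal[OF _ C(1)] D(2) C(2) by blast
      finally show "q \<in> {p \<in> SGM. univ_map p \<in> W}"
        using q(1) C(3) by blast
    qed
    moreover have "openin SGtop (stone_basic G Def D)"
      using Def.openin_stone_basic Def.stone_spaceD(1)[OF p] D(1) by blast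
    ultimately show "\<exists>T. openin SGtop T \<and> p \<in> T \<and> T \<subseteq> {p \<in> SGM. univ_map p \<in> W}"
      using p D(1) by (intro exI[of _ "stone_basic G Def D"]) (auto simp: stone_basic_def)
  qed
qed

lemma univ_map_equivariant:
  assumes g: "g \<in> G" and p: "p \<in> SGM"
  shows "univ_map (act g p) = \<alpha> g (univ_map p)"
proof (rule univ_map_eqI[OF type_act_in_SGM[OF g p]])
  have hp: "type_limit p (univ_map p)"
    by (rule type_limit_univ_map[OF p])
  show "type_limit (act g p) (\<alpha> g (univ_map p))"
    unfolding type_limit_def
  proof (intro conjI ballI)
    show "\<alpha> g (univ_map p) \<in> topspace X"
      using homeomorphic_imp_surjective_map[OF homeomorphic_map_\<alpha>[OF g]] hp
      by (auto simp: type_limit_def)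
    fix D assume "D \<in> act g p"
    then have D: "D \<in> Def" and E: "{x \<in> G. g \<otimes>\<^bsub>Gr\<^esub> x \<in> D} \<in> p"
      by (simp_all add: mem_type_act_iff)
    define E where "E = {x \<in> G. g \<otimes>\<^bsub>Gr\<^esub> x \<in> D}"
    have "E \<subseteq> G"
      by (simp add: E_def)
    have "\<alpha> g (univ_map p) \<in> \<alpha> g ` (X closure_of (orbit ` E))"
      using hp E by (simp add: type_limit_def E_def)
    also have "\<dots> = X closure_of (\<alpha> g ` orbit ` E)"
    proof -
      have "orbit ` E \<subseteq> topspace X"
        using \<open>E \<subseteq> G\<close> orbit_in_topspace by blast
      then show ?thesis
        by (rule homeomorphic_map_closure_of[OF homeomorphic_map_\<alpha>[OF g], symmetric])
    qed
    also have "\<dots> \<subseteq> X closure_of (orbit ` D)"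
    proof (rule closure_of_mono, rule subsetI)
      fix y assume "y \<in> \<alpha> g ` orbit ` E"
      then obtain x where "x \<in> G" "g \<otimes>\<^bsub>Gr\<^esub> x \<in> D" "y = \<alpha> g (orbit x)"
        by (auto simp: E_def)
      then show "y \<in> orbit ` D"
        using orbit_mult[OF g] by (metis image_eqI)
    qed
    finally show "\<alpha> g (univ_map p) \<in> X closure_of (orbit ` D)" .
  qed
qed

lemma univ_map_surjective: "univ_map ` SGM = topspace X"
proof
  show "univ_map ` SGM \<subseteq> topspace X"
    using univ_map_in_topspace by blast
  have "compactin X (univ_map ` SGM)"
    using image_compactin Def.compact_space_stone_topology continuous_map_univ_map
    unfolding compact_space_def Def.topspace_stone_topology by blast
  then have "closedin X (univ_map ` SGM)"
    using compactin_imp_closedin Hausdorff_space_X by blast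
  moreover have "orbit ` G \<subseteq> univ_map ` SGM"
    using univ_map_tp tp_in_SGM by (metis image_eqI image_subsetI)
  ultimately show "topspace X \<subseteq> univ_map ` SGM"
    using closure_of_minimal closure_of_orbit by metis
qed

lemma univ_map_unique:
  assumes h: "continuous_map SGtop X h"
    and equiv: "\<forall>g\<in>G. \<forall>p\<in>SGM. h (act g p) = \<alpha> g (h p)"
    and base: "h (tpG \<one>\<^bsub>Gr\<^esub>) = x0"
  shows "\<forall>p\<in>SGM. h p = univ_map p"
proof -
  have "h (tpG g) = univ_map (tpG g)" if g: "g \<in> G" for g
  proof -
    have "h (tpG g) = \<alpha> g x0"
      using equiv g tp_in_SGM[OF one_closed] base type_act_tp_one[OF g] by metis
    then show ?thesis
      using univ_map_tp[OF g] by (simp add: orbit_def)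
  qed
  then have "tpG ` G \<subseteq> {p \<in> topspace SGtop. h p = univ_map p}"
    using tp_in_SGM Def.topspace_stone_topology by auto
  moreover have "closedin SGtop {p \<in> topspace SGtop. h p = univ_map p}"
    by (rule closedin_continuous_maps_eq[OF Hausdorff_space_X h continuous_map_univ_map])
  ultimately have "SGtop closure_of (tpG ` G) \<subseteq> {p \<in> topspace SGtop. h p = univ_map p}"
    by (rule closure_of_minimal)
  then show ?thesis
    using closure_of_realized_types by blast
qed

end

context def_group
begin

lemma ex_ambit_morphism_from_types:
  assumes "definable_ambit FI RI k Gr X \<alpha> x0"
  shows "\<exists>h. continuous_map SGtop X h
      \<and> (\<forall>g\<in>G. \<forall>p\<in>SGM. h (act g p) = \<alpha> g (h p))
      \<and> h (tpG \<one>\<^bsub>Gr\<^esub>) = x0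
      \<and> (\<forall>h'. continuous_map SGtop X h'
           \<and> (\<forall>g\<in>G. \<forall>p\<in>SGM. h' (act g p) = \<alpha> g (h' p))
           \<and> h' (tpG \<one>\<^bsub>Gr\<^esub>) = x0
           \<longrightarrow> (\<forall>p\<in>SGM. h' p = h p))
      \<and> h ` SGM = topspace X"
proof -
  interpret def_ambit FI RI k Gr X \<alpha> x0
    by unfold_locales (rule assms)
  show ?thesis
  proof (intro exI[of _ univ_map] conjI)
    show "continuous_map SGtop X univ_map"
      by (rule continuous_map_univ_map)
    show "\<forall>g\<in>G. \<forall>p\<in>SGM. univ_map (act g p) = \<alpha> g (univ_map p)"
      using univ_map_equivariant by blast
    show "univ_map (tpG \<one>\<^bsub>Gr\<^esub>) = x0"
      by (rule univ_map_tp_one)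
    show "\<forall>h'. continuous_map SGtop X h' \<and> (\<forall>g\<in>G. \<forall>p\<in>SGM. h' (act g p) = \<alpha> g (h' p))
        \<and> h' (tpG \<one>\<^bsub>Gr\<^esub>) = x0 \<longrightarrow> (\<forall>p\<in>SGM. h' p = univ_map p)"
      using univ_map_unique by blast
    show "univ_map ` SGM = topspace X"
      by (rule univ_map_surjective)
  qed
qed

end

theorem proposition3p8:
  fixes FI :: "'f \<Rightarrow> 'm list \<Rightarrow> 'm" and RI :: "'r \<Rightarrow> 'm list \<Rightarrow> bool"
    and k :: nat and Gr :: "('m list, 'z) monoid_scheme"
  assumes G: "definable_group FI RI k Gr"
    and defb: "\<forall>p \<in> SG FI RI k (carrier Gr). type_definable FI RI k (carrier Gr) p"
  shows "definable_ambit FI RI k Gr (SG_top FI RI k (carrier Gr))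
            (type_act FI RI k Gr) (tp FI RI k (carrier Gr) \<one>\<^bsub>Gr\<^esub>)
       \<and> (\<forall>(X :: 'x topology) \<alpha> x0. definable_ambit FI RI k Gr X \<alpha> x0 \<longrightarrow> (
           \<exists>h. continuous_map (SG_top FI RI k (carrier Gr)) X h
             \<and> (\<forall>g\<in>carrier Gr. \<forall>p\<in>SG FI RI k (carrier Gr). h (type_act FI RI k Gr g p) = \<alpha> g (h p))
             \<and> h (tp FI RI k (carrier Gr) \<one>\<^bsub>Gr\<^esub>) = x0
             \<and> (\<forall>h'. continuous_map (SG_top FI RI k (carrier Gr)) X h'
                  \<and> (\<forall>g\<in>carrier Gr. \<forall>p\<in>SG FI RI k (carrier Gr). h' (type_act FI RI k Gr g p) = \<alpha> g (h' p))
                  \<and> h' (tp FI RI k (carrier Gr) \<one>\<^bsub>Gr\<^esub>) = x0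
                  \<longrightarrow> (\<forall>p\<in>SG FI RI k (carrier Gr). h' p = h p))
             \<and> h ` SG FI RI k (carrier Gr) = topspace X))"
proof -
  interpret def_group FI RI k Gr
    by unfold_locales (rule G)
  show ?thesis
    unfolding SG_eq SG_top_eq
    using definable_ambit_types[OF defb[unfolded SG_eq]] ex_ambit_morphism_from_types by blast
qed

end
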